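(* Let $r\ge 2$ be a constant and $\lambda\le n^r$. Consider $\lambda$ isolated islands (no migration), each independently running the (1+1) EA with mutation probability $1/n$ on $\mathrm{Fork}_{n,r}$ from an independent uniformly random initial string. Let $T$ be the number of rounds until some island has the optimum. Then $E(T)\in O\!\left(n\log n+\frac{n^{2r}}{\lambda 2^\lambda}+\frac{n^r}{\lambda}\right)$.
   Context: $\mathrm{Fork}_{n,r}(x)=n+1$ if $x=0^r1^{n-r}$, $n+2$ if $x=1^{n-r}0^r$ (the optimum), and $|x|_1$ otherwise, for $n\ge 2r$. The (1+1) EA: each round create $y$ by flipping each bit of the current $x$ independently with probability $1/n$ and set $x\gets y$ if the fitness of $y$ is at least that of $x$. Asymptotics are in $n$, with $\lambda=\lambda(n)$. *)

theory Defs
  imports "HOL-Probability.Probability"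
begin

text \<open>Bit strings of length n are bool lists; True = 1, False = 0.\<close>

definition ones :: "bool list \<Rightarrow> nat" where
  "ones x = length (filter id x)"

definition fork_trap :: "nat \<Rightarrow> nat \<Rightarrow> bool list" where
  "fork_trap n r = replicate r False @ replicate (n - r) True"

definition fork_opt :: "nat \<Rightarrow> nat \<Rightarrow> bool list" where
  "fork_opt n r = replicate (n - r) True @ replicate r False"

definition fork :: "nat \<Rightarrow> nat \<Rightarrow> bool list \<Rightarrow> nat" where
  "fork n r x = (if x = fork_trap n r then n + 1
                 else if x = fork_opt n r then n + 2
                 else ones x)"

fun mutate :: "real \<Rightarrow> bool list \<Rightarrow> bool list pmf" where
  "mutate p [] = return_pmf []"
| "mutate p (b # bs) =
     bind_pmf (bernoulli_pmf p) (\<lambda>f. bind_pmf (mutate p bs) (\<lambda>rest. return_pmf ((b \<noteq> f) # rest)))"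

definition ea_step :: "nat \<Rightarrow> nat \<Rightarrow> bool list \<Rightarrow> bool list pmf" where
  "ea_step n r x = bind_pmf (mutate (1 / real n) x)
      (\<lambda>y. return_pmf (if fork n r y \<ge> fork n r x then y else x))"

fun indep_list :: "'a pmf list \<Rightarrow> 'a list pmf" where
  "indep_list [] = return_pmf []"
| "indep_list (p # ps) = bind_pmf p (\<lambda>x. bind_pmf (indep_list ps) (\<lambda>xs. return_pmf (x # xs)))"

definition has_opt :: "nat \<Rightarrow> nat \<Rightarrow> bool list list \<Rightarrow> bool" where
  "has_opt n r xs = (\<exists>x\<in>set xs. x = fork_opt n r)"

text \<open>One round of lambda isolated islands, each independently performing one EA step;
  the process is stopped (frozen) once some island holds the optimum, so that
  "no island has the optimum at time t" is exactly the event T > t.\<close>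
definition islands_step :: "nat \<Rightarrow> nat \<Rightarrow> bool list list \<Rightarrow> bool list list pmf" where
  "islands_step n r xs = (if has_opt n r xs then return_pmf xs
                          else indep_list (map (ea_step n r) xs))"

definition islands_init :: "nat \<Rightarrow> nat \<Rightarrow> bool list list pmf" where
  "islands_init n lam = indep_list (replicate lam (pmf_of_set {x. length x = n}))"

fun islands_state :: "nat \<Rightarrow> nat \<Rightarrow> nat \<Rightarrow> nat \<Rightarrow> bool list list pmf" where
  "islands_state n r lam 0 = islands_init n lam"
| "islands_state n r lam (Suc t) = bind_pmf (islands_state n r lam t) (islands_step n r)"

text \<open>Expected value of the first hitting time T (rounds until some island holds the optimum),
  via E(T) = sum over t \<ge> 0 of Pr(T > t), in the extended nonnegative reals (may be infinite).\<close>
definition expected_T :: "nat \<Rightarrow> nat \<Rightarrow> nat \<Rightarrow> ennreal" where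
  "expected_T n r lam =
     (\<Sum>t. ennreal (measure_pmf.prob (islands_state n r lam t) {xs. \<not> has_opt n r xs}))"

end

theory Submission
  imports Defs
begin

text \<open>
  Write \<open>a\<^sub>t\<close> for the probability that a single island has not found the optimum after
  \<open>t\<close> rounds; the islands are independent, so \<open>Pr(T > t) = a\<^sub>t\<^sup>\<lambda>\<close>. Reversing a string swaps
  trap and optimum and preserves the number of ones, and this symmetry is only broken by
  jumps from the trap to the optimum. Hence an island is at least as likely to sit on the optimum
  as on the trap, so \<open>a\<^sub>t \<le> (1 + u\<^sub>t) / 2\<close> where \<open>u\<^sub>t\<close> is the probability of being at
  neither. Multiplicative drift on the number of zeros makes \<open>u\<^sub>t\<close> decay geometrically with
  rate \<open>1/(e n\<^sup>r)\<close> after \<open>O(n log n)\<close> rounds, and the trap is left with probability at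
  least \<open>1/(e n\<^sup>2\<^sup>r)\<close> per round. Summing \<open>a\<^sub>t\<^sup>\<lambda>\<close>: the first \<open>O(n log n)\<close> rounds contribute
  at most one each, the decay of \<open>u\<^sub>t\<close> contributes \<open>O(n\<^sup>r/\<lambda>)\<close>, and afterwards only the
  trap remains, whose probability \<open>2\<^sup>-\<^sup>\<lambda>\<close> decays with ratio \<open>(1 - 1/(e n\<^sup>2\<^sup>r))\<^sup>\<lambda>\<close>,
  giving \<open>O(n\<^sup>2\<^sup>r / (\<lambda> 2\<^sup>\<lambda>))\<close>.
\<close>

section \<open>Standard bit mutation\<close>

fun hamming :: "bool list \<Rightarrow> bool list \<Rightarrow> nat" where
  "hamming (a # as) (b # bs) = (if a = b then 0 else 1) + hamming as bs"
| "hamming _ _ = 0"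

lemma hamming_le_length: "hamming xs ys \<le> length xs"
  by (induction xs ys rule: hamming.induct) auto

lemma hamming_self [simp]: "hamming x x = 0"
  by (induction x) auto

lemma hamming_append:
  "length a = length a' \<Longrightarrow> hamming (a @ b) (a' @ b') = hamming a a' + hamming b b'"
  by (induction a a' rule: hamming.induct) auto

lemma hamming_replicate:
  "hamming (replicate k a) (replicate k b) = (if a = b then 0 else k)"
  by (induction k) auto

lemma hamming_rev: "length x = length y \<Longrightarrow> hamming (rev x) (rev y) = hamming x y"
  by (induction x y rule: hamming.induct) (simp_all add: hamming_append)

lemma hamming_set_True:
  "i < length x \<Longrightarrow> \<not> x ! i \<Longrightarrow> hamming x (x[i := True]) = 1"
proof (induction x arbitrary: i)
  case (Cons a x)
  then show ?case by (cases i) auto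
qed simp

lemma mutate_Cons:
  "mutate p (b # bs) = map_pmf (\<lambda>(f, rest). (b \<noteq> f) # rest) (pair_pmf (bernoulli_pmf p) (mutate p bs))"
  by (simp add: pair_pmf_def map_pmf_def bind_assoc_pmf bind_return_pmf)

lemma length_mutate: "y \<in> set_pmf (mutate p x) \<Longrightarrow> length y = length x"
  by (induction x arbitrary: y) (auto simp: mutate_Cons)

lemma pmf_mutate:
  assumes "0 \<le> p" "p \<le> 1" "length y = length x"
  shows "pmf (mutate p x) y = p ^ hamming x y * (1 - p) ^ (length x - hamming x y)"
  using assms(3)
proof (induction x arbitrary: y)
  case Nil
  then show ?case by simp
next
  case (Cons b bs)
  then obtain c cs where y: "y = c # cs" "length cs = length bs" by (cases y) auto
  have "(\<lambda>(f, rest). (b \<noteq> f) # rest) -` {c # cs} = {b \<noteq> c} \<times> {cs}"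
    by auto
  then have "pmf (mutate p (b # bs)) y = pmf (bernoulli_pmf p) (b \<noteq> c) * pmf (mutate p bs) cs"
    unfolding mutate_Cons y pmf_map
    by (simp add: measure_pmf_single pmf_pair)
  also have "\<dots> = (if b = c then 1 - p else p) * (p ^ hamming bs cs * (1 - p) ^ (length bs - hamming bs cs))"
    using Cons.IH[OF y(2)] assms by auto
  also have "\<dots> = p ^ hamming (b # bs) y * (1 - p) ^ (length (b # bs) - hamming (b # bs) y)"
    using hamming_le_length[of bs cs] by (auto simp: y Suc_diff_le)
  finally show ?case .
qed

lemma mutate_rev:
  assumes "0 \<le> p" "p \<le> 1"
  shows "mutate p (rev x) = map_pmf rev (mutate p x)"
proof (rule pmf_eqI)
  fix z
  have "pmf (map_pmf rev (mutate p x)) z = pmf (mutate p x) (rev z)"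
    by (metis pmf_map_inj' inj_on_rev rev_rev_ident)
  moreover have "pmf (mutate p (rev x)) z = pmf (mutate p x) (rev z)"
  proof (cases "length z = length x")
    case True
    then show ?thesis
      using assms by (simp add: pmf_mutate hamming_rev[of x "rev z", symmetric])
  next
    case False
    then show ?thesis
      by (metis length_rev pmf_eq_0_set_pmf length_mutate)
  qed
  ultimately show "pmf (mutate p (rev x)) z = pmf (map_pmf rev (mutate p x)) z"
    by simp
qed

lemma ones_le_length: "ones x \<le> length x"
  unfolding ones_def by simp

lemma ones_rev: "ones (rev x) = ones x"
  unfolding ones_def by (simp add: rev_filter[symmetric])

lemma ones_set_True: "i < length y \<Longrightarrow> \<not> y ! i \<Longrightarrow> ones (y[i := True]) = ones y + 1"
  by (induction y arbitrary: i) (auto simp: ones_def split: nat.split)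

lemma card_zero_positions: "card {i. i < length y \<and> \<not> y ! i} = length y - ones y"
proof -
  have "length (filter Not y) = card {i. i < length y \<and> \<not> y ! i}"
    by (simp add: length_filter_conv_card)
  moreover have "length (filter Not y) + ones y = length y"
    unfolding ones_def using sum_length_filter_compl[of id y] by (simp add: comp_def)
  ultimately show ?thesis by simp
qed

lemma ones_eq_length_imp_replicate: "ones y = length y \<Longrightarrow> y = replicate (length y) True"
proof (induction y)
  case (Cons a y)
  then show ?case
    using ones_le_length[of y] by (cases a) (auto simp: ones_def)
qed simp

lemma one_minus_inverse_pow_ge_exp:
  assumes "n \<ge> 1" "k \<ge> 1"
  shows "(1 - 1 / real n) ^ (n - k) \<ge> exp (-1)"
proof (cases "n = 1")
  case True
  then show ?thesis using assms by simp
next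
  case False
  define m where "m = n - 1"
  have m: "m \<ge> 1" "real n = real m + 1" using False assms by (auto simp: m_def)
  have "(1 + 1 / real m) ^ m \<le> exp (1 / real m) ^ m"
    by (rule power_mono) (auto simp: add.commute)
  also have "\<dots> = exp 1" using m by (simp add: exp_of_nat_mult[symmetric])
  finally have "exp (-1) \<le> inverse ((1 + 1 / real m) ^ m)"
    by (simp add: exp_minus le_imp_inverse_le add_pos_nonneg)
  also have "\<dots> = (1 - 1 / real n) ^ m"
    using m by (simp add: field_simps)
  also have "\<dots> \<le> (1 - 1 / real n) ^ (n - k)"
    by (rule power_decreasing) (use assms m in \<open>auto simp: m_def\<close>)
  finally show ?thesis .
qed

lemma pmf_mutate_ge:
  assumes "length y = length x" and "1 \<le> hamming x y"
  shows "1 / (exp 1 * real (length x) ^ hamming x y) \<le> pmf (mutate (1 / real (length x)) x) y"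
proof -
  define n k where "n = length x" and "k = hamming x y"
  have "1 \<le> k" "k \<le> n"
    using assms hamming_le_length[of x y] by (simp_all add: n_def k_def)
  then have "exp (-1) \<le> (1 - 1 / real n) ^ (n - k)"
    by (intro one_minus_inverse_pow_ge_exp) auto
  then have "(1 / real n) ^ k * exp (-1) \<le> (1 / real n) ^ k * (1 - 1 / real n) ^ (n - k)"
    by (intro mult_left_mono) auto
  moreover have "1 / (exp 1 * real n ^ k) = (1 / real n) ^ k * exp (-1)"
    by (simp add: exp_minus divide_inverse power_inverse)
  moreover have "1 / real n \<le> 1"
    using \<open>1 \<le> k\<close> \<open>k \<le> n\<close> by simp
  then have "pmf (mutate (1 / real n) x) y = (1 / real n) ^ k * (1 - 1 / real n) ^ (n - k)"
    using pmf_mutate[of "1 / real n" y x] assms by (simp add: n_def k_def)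
  ultimately show ?thesis
    by (simp add: n_def k_def)
qed

lemma pmf_le_pmf_map: "f a = b \<Longrightarrow> pmf M a \<le> pmf (map_pmf f M) b"
  unfolding pmf_map
  by (simp add: measure_pmf_single[symmetric] measure_pmf.finite_measure_mono)

section \<open>A single island\<close>

definition bitstrings :: "nat \<Rightarrow> bool list set" where
  "bitstrings n = {x. length x = n}"

lemma finite_bitstrings: "finite (bitstrings n)"
  using finite_lists_length_eq[of "UNIV :: bool set" n] by (simp add: bitstrings_def)

lemma bitstrings_not_empty: "bitstrings n \<noteq> {}"
  by (auto simp: bitstrings_def intro!: exI[of _ "replicate n True"])

lemma sum_pmf_bitstrings: "set_pmf M \<subseteq> bitstrings n \<Longrightarrow> (\<Sum>x\<in>bitstrings n. pmf M x) = 1"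
  using sum_pmf_eq_1[OF finite_bitstrings] by blast

lemma pmf_bind_bitstrings:
  assumes "set_pmf M \<subseteq> bitstrings n"
  shows "pmf (bind_pmf M f) x = (\<Sum>y\<in>bitstrings n. pmf M y * pmf (f y) x)"
  unfolding pmf_bind using assms
  by (subst integral_measure_pmf_real[OF finite_bitstrings]) (auto simp: mult.commute)

text \<open>Expectations as finite sums over the strings of length \<open>n\<close>; this spares the drift
  arguments all integrability side conditions.\<close>

definition expect_bits :: "nat \<Rightarrow> bool list pmf \<Rightarrow> (bool list \<Rightarrow> real) \<Rightarrow> real" where
  "expect_bits n M f = (\<Sum>x\<in>bitstrings n. pmf M x * f x)"

lemma expect_bits_eq_expectation:
  "set_pmf M \<subseteq> bitstrings n \<Longrightarrow> expect_bits n M f = measure_pmf.expectation M f"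
  unfolding expect_bits_def
  by (subst integral_measure_pmf_real[OF finite_bitstrings]) (auto simp: mult.commute)

lemma expect_bits_bind:
  assumes "set_pmf M \<subseteq> bitstrings n"
  shows "expect_bits n (bind_pmf M f) g = (\<Sum>y\<in>bitstrings n. pmf M y * expect_bits n (f y) g)"
proof -
  have "(\<Sum>x\<in>bitstrings n. (\<Sum>y\<in>bitstrings n. pmf M y * pmf (f y) x) * g x)
      = (\<Sum>y\<in>bitstrings n. \<Sum>x\<in>bitstrings n. pmf M y * (pmf (f y) x * g x))"
    by (subst sum.swap) (simp add: sum_distrib_right mult.assoc)
  then show ?thesis
    unfolding expect_bits_def pmf_bind_bitstrings[OF assms] by (simp add: sum_distrib_left)
qed

lemma expect_bits_mono:
  "(\<And>x. x \<in> bitstrings n \<Longrightarrow> f x \<le> g x) \<Longrightarrow> expect_bits n M f \<le> expect_bits n M g"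
  unfolding expect_bits_def by (intro sum_mono mult_left_mono) auto

lemma expect_bits_const: "set_pmf M \<subseteq> bitstrings n \<Longrightarrow> expect_bits n M (\<lambda>_. c) = c"
  unfolding expect_bits_def by (simp add: sum_distrib_right[symmetric] sum_pmf_bitstrings)

lemma expect_bits_add: "expect_bits n M (\<lambda>y. f y + g y) = expect_bits n M f + expect_bits n M g"
  unfolding expect_bits_def by (simp add: algebra_simps sum.distrib)

fun ea_dist :: "nat \<Rightarrow> nat \<Rightarrow> nat \<Rightarrow> bool list pmf" where
  "ea_dist n r 0 = pmf_of_set (bitstrings n)"
| "ea_dist n r (Suc t) = bind_pmf (ea_dist n r t) (ea_step n r)"

lemma length_fork_trap [simp]: "r \<le> n \<Longrightarrow> length (fork_trap n r) = n"
  by (simp add: fork_trap_def)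

lemma length_fork_opt [simp]: "r \<le> n \<Longrightarrow> length (fork_opt n r) = n"
  by (simp add: fork_opt_def)

lemma rev_fork_trap [simp]: "rev (fork_trap n r) = fork_opt n r"
  by (simp add: fork_trap_def fork_opt_def)

lemma rev_fork_opt [simp]: "rev (fork_opt n r) = fork_trap n r"
  by (simp add: fork_trap_def fork_opt_def)

lemma hamming_fork_trap_opt: "2 * r \<le> n \<Longrightarrow> hamming (fork_trap n r) (fork_opt n r) = 2 * r"
proof -
  assume "2 * r \<le> n"
  then have "fork_trap n r = replicate r False @ (replicate (n - 2 * r) True @ replicate r True)"
    and "fork_opt n r = replicate r True @ (replicate (n - 2 * r) True @ replicate r False)"
    by (simp_all add: fork_trap_def fork_opt_def replicate_add[symmetric] add.commute)
  then show ?thesis by (simp add: hamming_append hamming_replicate)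
qed

lemma hamming_ones_fork_opt: "r \<le> n \<Longrightarrow> hamming (replicate n True) (fork_opt n r) = r"
proof -
  assume "r \<le> n"
  then have "replicate n True = replicate (n - r) True @ replicate r True"
    by (simp add: replicate_add[symmetric])
  then show ?thesis by (simp add: fork_opt_def hamming_append hamming_replicate)
qed

definition ea_accept :: "nat \<Rightarrow> nat \<Rightarrow> bool list \<Rightarrow> bool list \<Rightarrow> bool list" where
  "ea_accept n r x y = (if fork n r y \<ge> fork n r x then y else x)"

lemma ea_step_eq_map: "ea_step n r x = map_pmf (ea_accept n r x) (mutate (1 / real n) x)"
  by (simp add: ea_step_def map_pmf_def ea_accept_def)

lemma one_plus_div_exp_power_le:
  fixes x z :: real
  assumes "1 \<le> z" and "2 \<le> x" and "2 \<le> r"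
  shows "(1 + z) / (exp 1 * x ^ r) \<le> z / (exp 1 * x)"
proof -
  have "x ^ 1 \<le> x ^ (r - 1)"
    using assms by (intro power_increasing) auto
  then have "2 \<le> x ^ (r - 1)"
    using assms by simp
  then have "x * 2 \<le> x * x ^ (r - 1)"
    using assms by (intro mult_left_mono) auto
  also have "\<dots> = x ^ r"
    using assms by (simp add: power_eq_if)
  finally have x_pow: "x * 2 \<le> x ^ r" .
  have "(1 + z) / x ^ r \<le> (2 * z) / x ^ r"
    using assms x_pow by (intro divide_right_mono) auto
  also have "\<dots> \<le> (2 * z) / (x * 2)"
    using assms x_pow by (intro divide_left_mono) auto
  finally have "(1 + z) / x ^ r / exp 1 \<le> z / x / exp 1"
    by (intro divide_right_mono) auto
  then show ?thesis
    by (simp add: ac_simps)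
qed

locale fork_setting =
  fixes n r :: nat
  assumes r_pos: "0 < r" and two_r_le: "2 * r \<le> n"
begin

abbreviation "opt \<equiv> fork_opt n r"
abbreviation "trap \<equiv> fork_trap n r"

definition others :: "bool list set" where
  "others = bitstrings n - {trap, opt}"

lemma r_less_n: "r < n"
  using r_pos two_r_le by linarith

lemma mutation_rate_bounds: "0 \<le> 1 / real n" "1 / real n \<le> (1::real)"
  using r_less_n by auto

lemma trap_ne_opt: "trap \<noteq> opt"
  using r_pos r_less_n by (cases r; cases "n - r") (auto simp: fork_trap_def fork_opt_def)

lemma opt_in_bitstrings: "opt \<in> bitstrings n" and trap_in_bitstrings: "trap \<in> bitstrings n"
  using r_less_n by (auto simp: bitstrings_def)

lemma fork_eq_ones: "x \<noteq> trap \<Longrightarrow> x \<noteq> opt \<Longrightarrow> fork n r x = ones x"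
  by (simp add: fork_def)

lemma fork_opt_value: "fork n r opt = n + 2"
  using trap_ne_opt by (simp add: fork_def)

lemma fork_trap_value: "fork n r trap = n + 1"
  by (simp add: fork_def)

lemma fork_le_n: "length x = n \<Longrightarrow> x \<noteq> trap \<Longrightarrow> x \<noteq> opt \<Longrightarrow> fork n r x \<le> n"
  using ones_le_length[of x] by (simp add: fork_def)

lemma ea_step_bitstrings: "x \<in> bitstrings n \<Longrightarrow> set_pmf (ea_step n r x) \<subseteq> bitstrings n"
  unfolding ea_step_eq_map ea_accept_def bitstrings_def
  by (auto dest: length_mutate split: if_splits)

lemma ea_step_opt: "ea_step n r opt = return_pmf opt"
proof -
  have "ea_accept n r opt y = opt" if "y \<in> set_pmf (mutate (1 / real n) opt)" for y
  proof -
    have "length y = n" using that length_mutate r_less_n by fastforce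
    then have "y \<noteq> opt \<Longrightarrow> fork n r y < n + 2"
      using fork_le_n[of y] fork_trap_value by (cases "y = trap") auto
    then show ?thesis
      unfolding ea_accept_def fork_opt_value by (cases "y = opt") auto
  qed
  then show ?thesis
    unfolding ea_step_eq_map by (simp add: map_pmf_cong[OF refl])
qed

lemma set_ea_step_trap: "set_pmf (ea_step n r trap) \<subseteq> {trap, opt}"
proof
  fix y assume "y \<in> set_pmf (ea_step n r trap)"
  then obtain z where z: "z \<in> set_pmf (mutate (1 / real n) trap)" "y = ea_accept n r trap z"
    unfolding ea_step_eq_map by auto
  then have "length z = n" using length_mutate r_less_n by fastforce
  then show "y \<in> {trap, opt}"
    using z fork_le_n[of z] unfolding ea_accept_def fork_trap_value by (auto split: if_splits)
qed

lemma ea_accept_rev: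
  assumes x: "length x = n" "x \<noteq> trap" "x \<noteq> opt" and z: "length z = n"
  shows "ea_accept n r (rev x) (rev z) = rev (ea_accept n r x z)"
proof -
  have "rev x \<noteq> trap" "rev x \<noteq> opt"
    using x by (simp_all add: rev_swap)
  then have fx: "fork n r (rev x) = fork n r x"
    using x by (simp add: fork_eq_ones ones_rev)
  have "fork n r x \<le> n" using fork_le_n x by blast
  show ?thesis
  proof (cases "z = trap \<or> z = opt")
    case True
    then have "fork n r (rev z) > n" "fork n r z > n"
      using fork_opt_value fork_trap_value by auto
    then show ?thesis unfolding ea_accept_def fx using \<open>fork n r x \<le> n\<close> by auto
  next
    case False
    then have "rev z \<noteq> trap" "rev z \<noteq> opt"
      by (simp_all add: rev_swap)
    then have "fork n r (rev z) = fork n r z" using False by (simp add: fork_eq_ones ones_rev)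
    then show ?thesis unfolding ea_accept_def fx by auto
  qed
qed

lemma ea_step_rev:
  assumes "x \<in> others"
  shows "ea_step n r (rev x) = map_pmf rev (ea_step n r x)"
proof -
  have "ea_step n r (rev x) = map_pmf (\<lambda>z. ea_accept n r (rev x) (rev z)) (mutate (1 / real n) x)"
    unfolding ea_step_eq_map mutate_rev[OF mutation_rate_bounds] by (simp add: map_pmf_comp)
  also have "\<dots> = map_pmf (\<lambda>z. rev (ea_accept n r x z)) (mutate (1 / real n) x)"
    using assms ea_accept_rev length_mutate
    by (intro map_pmf_cong) (auto simp: others_def bitstrings_def)
  finally show ?thesis
    unfolding ea_step_eq_map by (simp add: map_pmf_comp)
qed

lemma set_ea_dist: "set_pmf (ea_dist n r t) \<subseteq> bitstrings n"
proof (induction t)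
  case (Suc t)
  then show ?case using ea_step_bitstrings by fastforce
qed (use finite_bitstrings bitstrings_not_empty in auto)

lemma sum_bitstrings_split: "(\<Sum>y\<in>bitstrings n. f y) = f trap + f opt + (\<Sum>y\<in>others. f y)"
proof -
  have "(\<Sum>y\<in>bitstrings n. f y) = (\<Sum>y\<in>{trap, opt}. f y) + (\<Sum>y\<in>others. f y)"
    unfolding others_def using opt_in_bitstrings trap_in_bitstrings finite_bitstrings
    by (subst sum.subset_diff[of "{trap, opt}"]) (auto simp: add.commute)
  then show ?thesis using trap_ne_opt by simp
qed

lemma expect_bits_ea_step:
  assumes "x \<in> bitstrings n"
  shows "expect_bits n (ea_step n r x) g
           = (\<Sum>z\<in>bitstrings n. pmf (mutate (1 / real n) x) z * g (ea_accept n r x z))"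
proof -
  have "set_pmf (mutate (1 / real n) x) \<subseteq> bitstrings n"
    using assms length_mutate by (auto simp: bitstrings_def)
  then show ?thesis
    using expect_bits_eq_expectation[OF ea_step_bitstrings[OF assms]]
      expect_bits_eq_expectation[of "mutate (1 / real n) x" n]
    unfolding expect_bits_def ea_step_eq_map by simp
qed

definition inflow :: "nat \<Rightarrow> bool list \<Rightarrow> real" where
  "inflow t x = (\<Sum>y\<in>others. pmf (ea_dist n r t) y * pmf (ea_step n r y) x)"

lemma pmf_ea_dist_Suc:
  "pmf (ea_dist n r (Suc t)) x = pmf (ea_dist n r t) trap * pmf (ea_step n r trap) x
     + pmf (ea_dist n r t) opt * pmf (ea_step n r opt) x + inflow t x"
  unfolding ea_dist.simps pmf_bind_bitstrings[OF set_ea_dist] sum_bitstrings_split inflow_def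
  by simp

lemma rev_in_others: "x \<in> others \<Longrightarrow> rev x \<in> others"
  by (auto simp: others_def bitstrings_def rev_swap)

lemma pmf_ea_step_special: "x \<in> others \<Longrightarrow> y \<in> {trap, opt} \<Longrightarrow> pmf (ea_step n r y) x = 0"
  using set_ea_step_trap ea_step_opt unfolding others_def
  by (auto simp: pmf_eq_0_set_pmf)

lemma inflow_rev:
  assumes sym: "\<And>y. y \<in> others \<Longrightarrow> pmf (ea_dist n r t) (rev y) = pmf (ea_dist n r t) y"
  shows "inflow t (rev x) = inflow t x"
proof -
  have "bij_betw rev others others"
    by (rule bij_betwI[of _ _ _ rev]) (auto intro: rev_in_others)
  then have "inflow t (rev x)
      = (\<Sum>y\<in>others. pmf (ea_dist n r t) (rev y) * pmf (ea_step n r (rev y)) (rev x))"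
    unfolding inflow_def by (rule sum.reindex_bij_betw[symmetric])
  also have "\<dots> = inflow t x"
    unfolding inflow_def using sym by (intro sum.cong) (simp_all add: ea_step_rev pmf_map_inj')
  finally show ?thesis .
qed

text \<open>Neither the trap nor the optimum ever leads back into \<open>others\<close>, so mirroring the mass
  on \<open>others\<close> mirrors everything that flows into it.\<close>

lemma pmf_ea_dist_rev: "y \<in> others \<Longrightarrow> pmf (ea_dist n r t) (rev y) = pmf (ea_dist n r t) y"
proof (induction t arbitrary: y)
  case 0
  then have "rev y \<in> bitstrings n" "y \<in> bitstrings n"
    using rev_in_others unfolding others_def by auto
  then show ?case using finite_bitstrings bitstrings_not_empty by simp
next
  case (Suc t)
  then show ?case
    unfolding pmf_ea_dist_Suc
    using inflow_rev[OF Suc.IH] pmf_ea_step_special[OF Suc.prems]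
      pmf_ea_step_special[OF rev_in_others[OF Suc.prems]]
    by simp
qed

lemma inflow_trap_eq_opt: "inflow t trap = inflow t opt"
  using inflow_rev[OF pmf_ea_dist_rev, where x = trap] by simp

lemma inflow_nonneg: "inflow t x \<ge> 0"
  unfolding inflow_def by (intro sum_nonneg mult_nonneg_nonneg) auto

definition p_opt :: "nat \<Rightarrow> real" where
  "p_opt t = pmf (ea_dist n r t) opt"

definition p_trap :: "nat \<Rightarrow> real" where
  "p_trap t = pmf (ea_dist n r t) trap"

definition p_other :: "nat \<Rightarrow> real" where
  "p_other t = 1 - p_opt t - p_trap t"

definition escape_prob :: real where
  "escape_prob = pmf (ea_step n r trap) opt"

lemma escape_prob_bounds: "0 \<le> escape_prob" "escape_prob \<le> 1"
  unfolding escape_prob_def by (auto simp: pmf_le_1)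

lemma pmf_ea_step_trap_trap: "pmf (ea_step n r trap) trap = 1 - escape_prob"
proof -
  have "sum (pmf (ea_step n r trap)) {trap, opt} = 1"
    by (rule sum_pmf_eq_1) (use set_ea_step_trap in auto)
  then show ?thesis unfolding escape_prob_def using trap_ne_opt by simp
qed

lemma p_opt_Suc: "p_opt (Suc t) = p_trap t * escape_prob + p_opt t + inflow t opt"
  unfolding p_opt_def p_trap_def escape_prob_def pmf_ea_dist_Suc ea_step_opt by simp

lemma p_trap_Suc: "p_trap (Suc t) = p_trap t * (1 - escape_prob) + inflow t opt"
  unfolding p_opt_def p_trap_def pmf_ea_dist_Suc pmf_ea_step_trap_trap ea_step_opt
  using trap_ne_opt inflow_trap_eq_opt by simp

lemma p_other_Suc: "p_other (Suc t) = p_other t - 2 * inflow t opt"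
  unfolding p_other_def p_opt_Suc p_trap_Suc by (simp add: algebra_simps)

lemma p_other_eq_sum: "p_other t = (\<Sum>y\<in>others. pmf (ea_dist n r t) y)"
  using sum_pmf_bitstrings[OF set_ea_dist, of t] sum_bitstrings_split[of "pmf (ea_dist n r t)"]
  unfolding p_other_def p_opt_def p_trap_def by simp

lemma p_other_antimono: "s \<le> t \<Longrightarrow> p_other t \<le> p_other s"
proof (induction t rule: dec_induct)
  case (step t)
  then show ?case using p_other_Suc[of t] inflow_nonneg[of t opt] by simp
qed simp

lemma p_trap_le_p_opt: "p_trap t \<le> p_opt t"
proof (induction t)
  case 0
  then show ?case
    using opt_in_bitstrings trap_in_bitstrings finite_bitstrings bitstrings_not_empty
    by (simp add: p_opt_def p_trap_def)
next
  case (Suc t)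
  have "0 \<le> escape_prob * p_trap t"
    using escape_prob_bounds by (simp add: p_trap_def)
  then show ?case using Suc unfolding p_opt_Suc p_trap_Suc by (simp add: right_diff_distrib)
qed

lemma not_opt_le_half: "1 - p_opt t \<le> (1 + p_other t) / 2"
  using p_trap_le_p_opt[of t] unfolding p_other_def by simp

text \<open>Every unit of inflow into the trap removes two units from \<open>others\<close>, so
  \<open>p_trap + p_other / 2\<close> changes only through escapes from the trap.\<close>

lemma p_trap_plus_half_other_decay:
  assumes q: "0 \<le> q" "q \<le> escape_prob" and "s \<le> t"
  shows "p_trap t + p_other t / 2 \<le> (1 - q) ^ (t - s) * p_trap s + p_other s / 2"
  using \<open>s \<le> t\<close>
proof (induction t rule: dec_induct)
  case base
  then show ?case by simp
next
  case (step t)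
  have q1: "0 \<le> 1 - q" "1 - q \<le> 1" using q escape_prob_bounds by auto
  have "p_trap (Suc t) + p_other (Suc t) / 2 = (1 - escape_prob) * p_trap t + p_other t / 2"
    unfolding p_trap_Suc p_other_Suc by (simp add: field_simps)
  also have "\<dots> \<le> (1 - q) * p_trap t + p_other t / 2"
    using q by (intro add_right_mono mult_right_mono) (auto simp: p_trap_def)
  also have "\<dots> \<le> (1 - q) * ((1 - q) ^ (t - s) * p_trap s + p_other s / 2 - p_other t / 2)
                  + p_other t / 2"
    using step.IH q1 by (intro add_right_mono mult_left_mono) auto
  also have "\<dots> = (1 - q) ^ (Suc t - s) * p_trap s + (1 - q) * (p_other s / 2 - p_other t / 2)
                  + p_other t / 2"
    using step.hyps(1) by (simp add: Suc_diff_le algebra_simps)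
  also have "\<dots> \<le> (1 - q) ^ (Suc t - s) * p_trap s + p_other s / 2"
  proof -
    have "(1 - q) * (p_other s / 2 - p_other t / 2) \<le> p_other s / 2 - p_other t / 2"
      using p_other_antimono[OF step.hyps(1)] q1 by (intro mult_left_le_one_le) auto
    then show ?thesis by linarith
  qed
  finally show ?case .
qed

lemma not_opt_le_decay:
  assumes "0 \<le> q" "q \<le> escape_prob" and "s \<le> t"
  shows "1 - p_opt t \<le> (1 - q) ^ (t - s) / 2 + p_other s"
proof -
  have "p_trap s \<le> 1 / 2"
    using p_trap_le_p_opt[of s] p_other_eq_sum[of s] sum_nonneg[of others "pmf (ea_dist n r s)"]
    unfolding p_other_def by simp
  then have "(1 - q) ^ (t - s) * p_trap s \<le> (1 - q) ^ (t - s) * (1 / 2)"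
    using assms escape_prob_bounds by (intro mult_left_mono) auto
  moreover have "1 - p_opt t = p_trap t + p_other t"
    unfolding p_other_def by simp
  ultimately show ?thesis
    using p_trap_plus_half_other_decay[OF assms] p_other_antimono[OF \<open>s \<le> t\<close>] by linarith
qed

lemma expect_bits_ea_dist_contract:
  assumes "0 \<le> c" and one_step: "\<And>y. y \<in> bitstrings n \<Longrightarrow> expect_bits n (ea_step n r y) f \<le> c * f y"
    and "s \<le> t"
  shows "expect_bits n (ea_dist n r t) f \<le> c ^ (t - s) * expect_bits n (ea_dist n r s) f"
  using \<open>s \<le> t\<close>
proof (induction t rule: dec_induct)
  case base
  then show ?case by simp
next
  case (step t)
  have "expect_bits n (ea_dist n r (Suc t)) f
      = (\<Sum>y\<in>bitstrings n. pmf (ea_dist n r t) y * expect_bits n (ea_step n r y) f)"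
    by (simp add: expect_bits_bind[OF set_ea_dist])
  also have "\<dots> \<le> (\<Sum>y\<in>bitstrings n. pmf (ea_dist n r t) y * (c * f y))"
    by (intro sum_mono mult_left_mono one_step) auto
  also have "\<dots> = c * expect_bits n (ea_dist n r t) f"
    unfolding expect_bits_def by (simp add: sum_distrib_left algebra_simps)
  also have "\<dots> \<le> c ^ (Suc t - s) * expect_bits n (ea_dist n r s) f"
    using mult_left_mono[OF step.IH \<open>0 \<le> c\<close>] step.hyps(1) by (simp add: Suc_diff_le)
  finally show ?case .
qed

lemma expect_bits_ea_step_le:
  assumes y: "y \<in> bitstrings n" and F: "F \<subseteq> bitstrings n"
    and all: "\<And>z. z \<in> bitstrings n \<Longrightarrow> g (ea_accept n r y z) \<le> G"
    and on_F: "\<And>z. z \<in> F \<Longrightarrow> g (ea_accept n r y z) \<le> G - 1"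
  shows "expect_bits n (ea_step n r y) g \<le> G - (\<Sum>z\<in>F. pmf (mutate (1 / real n) y) z)"
proof -
  let ?M = "mutate (1 / real n) y"
  have "set_pmf ?M \<subseteq> bitstrings n"
    using y length_mutate by (auto simp: bitstrings_def)
  then have total: "(\<Sum>z\<in>bitstrings n. pmf ?M z * G) = G"
    using sum_pmf_bitstrings by (simp add: sum_distrib_right[symmetric])
  have "expect_bits n (ea_step n r y) g = (\<Sum>z\<in>bitstrings n. pmf ?M z * g (ea_accept n r y z))"
    by (rule expect_bits_ea_step[OF y])
  also have "\<dots> \<le> (\<Sum>z\<in>bitstrings n. pmf ?M z * G - (if z \<in> F then pmf ?M z else 0))"
  proof (rule sum_mono)
    fix z assume z: "z \<in> bitstrings n"
    show "pmf ?M z * g (ea_accept n r y z) \<le> pmf ?M z * G - (if z \<in> F then pmf ?M z else 0)"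
    proof (cases "z \<in> F")
      case True
      then have "pmf ?M z * g (ea_accept n r y z) \<le> pmf ?M z * (G - 1)"
        using on_F by (intro mult_left_mono) auto
      then show ?thesis using True by (simp add: algebra_simps)
    qed (use all[OF z] in \<open>simp add: mult_left_mono\<close>)
  qed
  also have "\<dots> = G - (\<Sum>z\<in>F. pmf ?M z)"
    using total sum.inter_restrict[OF finite_bitstrings, of "pmf ?M" n F] F
    by (simp add: sum_subtractf Int_absorb1)
  finally show ?thesis .
qed

text \<open>With \<open>b = 0\<close> the potential measures the distance to \<open>1\<^sup>n\<close>; with \<open>b = 1\<close> it dominates
  the indicator of being neither at the trap nor at the optimum.\<close>

definition potential :: "real \<Rightarrow> bool list \<Rightarrow> real" where
  "potential b y = (if y = trap \<or> y = opt then 0 else b + real (n - ones y))"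

lemma expect_bits_ea_step_potential_special:
  assumes "y = trap \<or> y = opt"
  shows "expect_bits n (ea_step n r y) (potential b) = 0"
proof -
  have zero: "pmf (ea_step n r y) x * potential b x = 0" for x
  proof (cases "x = trap \<or> x = opt")
    case False
    then have "pmf (ea_step n r y) x = 0"
      using assms set_ea_step_trap ea_step_opt by (auto simp: pmf_eq_0_set_pmf)
    then show ?thesis by simp
  qed (simp add: potential_def)
  then show ?thesis unfolding expect_bits_def by (simp add: zero)
qed

lemma potential_ea_accept_le:
  assumes y: "y \<noteq> trap" "y \<noteq> opt" and "b \<ge> 0"
  shows "potential b (ea_accept n r y z) \<le> potential b y"
proof (cases "fork n r z \<ge> fork n r y \<and> z \<noteq> trap \<and> z \<noteq> opt")
  case True
  then have "ones z \<ge> ones y" using y fork_eq_ones by auto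
  then show ?thesis using True y by (simp add: ea_accept_def potential_def)
qed (use assms in \<open>auto simp: ea_accept_def potential_def\<close>)

lemma potential_set_True:
  assumes y: "y \<in> bitstrings n" "y \<noteq> trap" "y \<noteq> opt" and i: "i < n" "\<not> y ! i"
    and "b \<ge> 0"
  shows "potential b (ea_accept n r y (y[i := True])) \<le> potential b y - 1"
proof -
  let ?z = "y[i := True]"
  have len: "length y = n" "length ?z = n" using y by (simp_all add: bitstrings_def)
  have ones_z: "ones ?z = ones y + 1" using ones_set_True[of i y] i len by simp
  have fork_y: "fork n r y = ones y" using fork_eq_ones y by auto
  have "ea_accept n r y ?z = ?z"
  proof (cases "?z = trap \<or> ?z = opt")
    case True
    then have "fork n r ?z \<ge> n + 1" using fork_trap_value fork_opt_value by auto
    then show ?thesis using fork_y ones_le_length[of y] len by (simp add: ea_accept_def)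
  qed (use fork_y ones_z fork_eq_ones in \<open>simp add: ea_accept_def\<close>)
  then show ?thesis
    using y ones_z ones_le_length[of ?z] len \<open>b \<ge> 0\<close> by (auto simp: potential_def)
qed

lemma prob_set_one_zero_ge:
  assumes y: "y \<in> bitstrings n"
  shows "(\<Sum>z\<in>(\<lambda>i. y[i := True]) ` {i. i < n \<and> \<not> y ! i}. pmf (mutate (1 / real n) y) z)
          \<ge> real (n - ones y) / (exp 1 * real n)"
proof -
  let ?I = "{i. i < n \<and> \<not> y ! i}"
  have len: "length y = n" using y by (simp add: bitstrings_def)
  have "inj_on (\<lambda>i. y[i := True]) ?I"
  proof (rule inj_onI, rule ccontr)
    fix i j assume i: "i \<in> ?I" and eq: "y[i := True] = y[j := True]" and "i \<noteq> j"
    then have "y[i := True] ! i = y ! i" by (simp add: eq)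
    then show False using i len by simp
  qed
  have "real (n - ones y) / (exp 1 * real n) = (\<Sum>i\<in>?I. 1 / (exp 1 * real n))"
    using card_zero_positions[of y] len by simp
  also have "\<dots> \<le> (\<Sum>i\<in>?I. pmf (mutate (1 / real n) y) (y[i := True]))"
  proof (rule sum_mono)
    fix i assume "i \<in> ?I"
    then have "hamming y (y[i := True]) = 1"
      using hamming_set_True len by simp
    then show "1 / (exp 1 * real n) \<le> pmf (mutate (1 / real n) y) (y[i := True])"
      using pmf_mutate_ge[of "y[i := True]" y] len by simp
  qed
  also have "\<dots> = (\<Sum>z\<in>(\<lambda>i. y[i := True]) ` ?I. pmf (mutate (1 / real n) y) z)"
    using \<open>inj_on (\<lambda>i. y[i := True]) ?I\<close> by (simp add: sum.reindex)
  finally show ?thesis .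
qed

lemma expect_bits_ea_step_potential:
  assumes y: "y \<in> bitstrings n" "y \<noteq> trap" "y \<noteq> opt" and "b \<ge> 0"
  shows "expect_bits n (ea_step n r y) (potential b)
           \<le> potential b y - real (n - ones y) / (exp 1 * real n)"
proof -
  let ?F = "(\<lambda>i. y[i := True]) ` {i. i < n \<and> \<not> y ! i}"
  have "?F \<subseteq> bitstrings n" using y by (auto simp: bitstrings_def)
  then have "expect_bits n (ea_step n r y) (potential b)
      \<le> potential b y - (\<Sum>z\<in>?F. pmf (mutate (1 / real n) y) z)"
    using potential_ea_accept_le[OF y(2,3) \<open>b \<ge> 0\<close>] potential_set_True[OF y _ _ \<open>b \<ge> 0\<close>]
    by (intro expect_bits_ea_step_le[OF y(1)]) auto
  then show ?thesis using prob_set_one_zero_ge[OF y(1)] by linarith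
qed

lemma expect_bits_ea_step_zeros:
  assumes "y \<in> bitstrings n"
  shows "expect_bits n (ea_step n r y) (potential 0) \<le> (1 - 1 / (exp 1 * real n)) * potential 0 y"
proof (cases "y = trap \<or> y = opt")
  case True
  then show ?thesis
    using expect_bits_ea_step_potential_special by (auto simp: potential_def)
next
  case False
  then have "expect_bits n (ea_step n r y) (potential 0)
      \<le> potential 0 y - real (n - ones y) / (exp 1 * real n)"
    using expect_bits_ea_step_potential[OF assms] by simp
  also have "\<dots> = (1 - 1 / (exp 1 * real n)) * potential 0 y"
    using False by (simp add: potential_def algebra_simps)
  finally show ?thesis .
qed

lemma expect_bits_ea_dist_zeros:
  "expect_bits n (ea_dist n r t) (potential 0) \<le> (1 - 1 / (exp 1 * real n)) ^ t * real n"
proof -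
  have "1 * 1 \<le> exp 1 * real n"
    using r_less_n by (intro mult_mono) auto
  then have c: "0 \<le> 1 - 1 / (exp 1 * real n)"
    by simp
  have "expect_bits n (ea_dist n r t) (potential 0)
      \<le> (1 - 1 / (exp 1 * real n)) ^ (t - 0) * expect_bits n (ea_dist n r 0) (potential 0)"
    by (rule expect_bits_ea_dist_contract[OF c expect_bits_ea_step_zeros]) auto
  also have "expect_bits n (ea_dist n r 0) (potential 0) \<le> expect_bits n (ea_dist n r 0) (\<lambda>_. real n)"
    by (rule expect_bits_mono) (auto simp: potential_def)
  also have "\<dots> = real n"
    by (rule expect_bits_const[OF set_ea_dist])
  finally show ?thesis using c by (simp add: mult_left_mono)
qed

lemma p_other_le_expect_bits_potential: "p_other t \<le> expect_bits n (ea_dist n r t) (potential 1)"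
proof -
  have "p_other t \<le> (\<Sum>y\<in>others. pmf (ea_dist n r t) y * potential 1 y)"
    unfolding p_other_eq_sum
    by (intro sum_mono) (auto simp: others_def potential_def mult_le_cancel_left1)
  also have "\<dots> = expect_bits n (ea_dist n r t) (potential 1)"
    unfolding expect_bits_def sum_bitstrings_split by (simp add: potential_def)
  finally show ?thesis .
qed

lemma pmf_mutate_ones_opt:
  "pmf (mutate (1 / real n) (replicate n True)) opt \<ge> 1 / (exp 1 * real n ^ r)"
  using pmf_mutate_ge[of opt "replicate n True"] hamming_ones_fork_opt r_pos r_less_n by simp

lemma escape_prob_ge: "escape_prob \<ge> 1 / (exp 1 * real n ^ (2 * r))"
proof -
  have "pmf (mutate (1 / real n) trap) opt \<le> escape_prob"
    unfolding escape_prob_def ea_step_eq_map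
    by (rule pmf_le_pmf_map) (simp add: ea_accept_def fork_opt_value fork_trap_value)
  moreover have "1 / (exp 1 * real n ^ (2 * r)) \<le> pmf (mutate (1 / real n) trap) opt"
    using pmf_mutate_ge[of opt trap] hamming_fork_trap_opt two_r_le r_pos by simp
  ultimately show ?thesis
    by linarith
qed

lemma expect_bits_ea_step_potential_one:
  assumes "2 \<le> r" and y: "y \<in> bitstrings n"
  shows "expect_bits n (ea_step n r y) (potential 1) \<le> (1 - 1 / (exp 1 * real n ^ r)) * potential 1 y"
proof -
  consider "y = trap \<or> y = opt" | "y \<noteq> trap" "y \<noteq> opt" "ones y = n"
    | "y \<noteq> trap" "y \<noteq> opt" "ones y < n"
    using ones_le_length[of y] y by (force simp: bitstrings_def)
  then show ?thesis
  proof cases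
    case 1
    then show ?thesis using expect_bits_ea_step_potential_special by (auto simp: potential_def)
  next
    case 2
    text \<open>From \<open>1\<^sup>n\<close> only a jump to the optimum lowers the potential.\<close>
    then have ones: "y = replicate n True"
      using ones_eq_length_imp_replicate[of y] y by (simp add: bitstrings_def)
    have "fork n r y \<le> n" using fork_le_n 2 y by (simp add: bitstrings_def)
    then have "expect_bits n (ea_step n r y) (potential 1)
        \<le> 1 - (\<Sum>z\<in>{opt}. pmf (mutate (1 / real n) y) z)"
      using potential_ea_accept_le[OF 2(1,2), of 1] opt_in_bitstrings 2
      by (intro expect_bits_ea_step_le[OF y])
        (auto simp: potential_def ea_accept_def fork_opt_value)
    also have "\<dots> \<le> (1 - 1 / (exp 1 * real n ^ r)) * potential 1 y"
      using pmf_mutate_ones_opt 2 by (simp add: ones potential_def)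
    finally show ?thesis .
  next
    case 3
    define z where "z = real (n - ones y)"
    have "1 \<le> z" "2 \<le> real n"
      using 3 \<open>2 \<le> r\<close> two_r_le by (simp_all add: z_def)
    then have "(1 + z) / (exp 1 * real n ^ r) \<le> z / (exp 1 * real n)"
      using \<open>2 \<le> r\<close> by (rule one_plus_div_exp_power_le)
    then have "potential 1 y - z / (exp 1 * real n) \<le> (1 - 1 / (exp 1 * real n ^ r)) * potential 1 y"
      using 3 by (simp add: potential_def z_def algebra_simps)
    then show ?thesis
      using expect_bits_ea_step_potential[OF y 3(1,2) zero_le_one] unfolding z_def by linarith
  qed
qed

lemma p_other_decay:
  assumes "2 \<le> r" and "s \<le> t"
  shows "p_other t \<le> (1 - 1 / (exp 1 * real n ^ r)) ^ (t - s) * (1 + real n * (1 - 1 / (exp 1 * real n)) ^ s)"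
proof -
  have "1 * 1 \<le> exp 1 * real n ^ r"
    using r_less_n by (intro mult_mono) auto
  then have c: "0 \<le> 1 - 1 / (exp 1 * real n ^ r)" by simp
  have "p_other t \<le> expect_bits n (ea_dist n r t) (potential 1)"
    by (rule p_other_le_expect_bits_potential)
  also have "\<dots> \<le> (1 - 1 / (exp 1 * real n ^ r)) ^ (t - s) * expect_bits n (ea_dist n r s) (potential 1)"
    using expect_bits_ea_step_potential_one[OF \<open>2 \<le> r\<close>] \<open>s \<le> t\<close>
    by (rule expect_bits_ea_dist_contract[OF c])
  also have "expect_bits n (ea_dist n r s) (potential 1)
      \<le> expect_bits n (ea_dist n r s) (\<lambda>y. 1 + potential 0 y)"
    by (rule expect_bits_mono) (simp add: potential_def)
  also have "\<dots> = 1 + expect_bits n (ea_dist n r s) (potential 0)"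
    by (simp add: expect_bits_add expect_bits_const[OF set_ea_dist])
  also have "\<dots> \<le> 1 + real n * (1 - 1 / (exp 1 * real n)) ^ s"
    using expect_bits_ea_dist_zeros[of s] by (simp add: mult.commute)
  finally show ?thesis using c by (simp add: mult_left_mono)
qed

end

section \<open>Independent islands\<close>

lemma set_indep_list:
  "xs \<in> set_pmf (indep_list ps) \<Longrightarrow> list_all2 (\<lambda>x p. x \<in> set_pmf p) xs ps"
  by (induction ps arbitrary: xs) auto

lemma indep_list_Cons:
  "indep_list (p # ps) = map_pmf (\<lambda>(x, xs). x # xs) (pair_pmf p (indep_list ps))"
  by (simp add: pair_pmf_def map_pmf_def bind_assoc_pmf bind_return_pmf)

lemma bind_indep_list_map:
  "bind_pmf (indep_list ps) (\<lambda>xs. indep_list (map f xs)) = indep_list (map (\<lambda>p. bind_pmf p f) ps)"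
proof (induction ps)
  case Nil
  then show ?case by (simp add: bind_return_pmf)
next
  case (Cons p ps)
  have "bind_pmf (indep_list (p # ps)) (\<lambda>xs. indep_list (map f xs))
      = bind_pmf p (\<lambda>x. bind_pmf (f x) (\<lambda>y. bind_pmf (bind_pmf (indep_list ps)
          (\<lambda>xs. indep_list (map f xs))) (\<lambda>ys. return_pmf (y # ys))))"
    by (simp add: bind_assoc_pmf bind_return_pmf bind_commute_pmf[of "indep_list ps"])
  then show ?case
    by (simp add: Cons.IH bind_assoc_pmf)
qed

lemma prob_indep_list_all:
  fixes ps :: "'a::countable pmf list"
  shows "measure_pmf.prob (indep_list ps) {xs. \<forall>x\<in>set xs. P x}
           = (\<Prod>p\<leftarrow>ps. measure_pmf.prob p {x. P x})"
proof (induction ps)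
  case (Cons p ps)
  have "(\<lambda>(x, xs). x # xs) -` {xs. \<forall>x\<in>set xs. P x} = {x. P x} \<times> {xs. \<forall>x\<in>set xs. P x}"
    by auto
  then show ?case
    unfolding indep_list_Cons measure_map_pmf
    using Cons by (simp add: measure_pmf_prob_product[OF countableI_type countableI_type])
qed simp

text \<open>Without the stopping rule of \<open>islands_step\<close> the islands are independent copies of
  \<open>ea_dist\<close>. Both processes agree up to the first time the optimum is found, which is all that
  \<open>censor\<close> retains.\<close>

definition censor :: "nat \<Rightarrow> nat \<Rightarrow> bool list list \<Rightarrow> bool list list option" where
  "censor n r xs = (if has_opt n r xs then None else Some xs)"

definition censored_step :: "nat \<Rightarrow> nat \<Rightarrow> bool list list option \<Rightarrow> bool list list option pmf" where
  "censored_step n r z = (case z of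
      None \<Rightarrow> return_pmf None
    | Some xs \<Rightarrow> map_pmf (censor n r) (indep_list (map (ea_step n r) xs)))"

context fork_setting
begin

lemma has_opt_indep_ea_step:
  assumes "has_opt n r xs" and "ys \<in> set_pmf (indep_list (map (ea_step n r) xs))"
  shows "has_opt n r ys"
proof -
  from assms(1) obtain i where i: "i < length xs" "xs ! i = opt"
    unfolding has_opt_def by (metis in_set_conv_nth)
  have "list_all2 (\<lambda>x p. x \<in> set_pmf p) ys (map (ea_step n r) xs)"
    using assms(2) by (rule set_indep_list)
  then have "ys ! i \<in> set_pmf (ea_step n r (xs ! i))" "i < length ys"
    using i list_all2_nthD list_all2_lengthD by fastforce+
  then have "ys ! i = opt"
    using i ea_step_opt by simp
  then show ?thesis
    unfolding has_opt_def using \<open>i < length ys\<close> by (metis nth_mem)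
qed

lemma censor_indep_ea_step:
  "map_pmf (censor n r) (indep_list (map (ea_step n r) xs)) = censored_step n r (censor n r xs)"
proof (cases "has_opt n r xs")
  case True
  then have "map_pmf (censor n r) (indep_list (map (ea_step n r) xs))
      = map_pmf (\<lambda>_. None) (indep_list (map (ea_step n r) xs))"
    using has_opt_indep_ea_step by (intro map_pmf_cong) (auto simp: censor_def)
  moreover have "censor n r xs = None"
    using True by (simp add: censor_def)
  ultimately show ?thesis
    by (simp add: censored_step_def)
next
  case False
  then have "censor n r xs = Some xs"
    by (simp add: censor_def)
  then show ?thesis
    by (simp add: censored_step_def)
qed

lemma censor_islands_step:
  "map_pmf (censor n r) (islands_step n r xs) = censored_step n r (censor n r xs)"
proof (cases "has_opt n r xs")
  case True
  then have "censor n r xs = None"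
    by (simp add: censor_def)
  then show ?thesis
    using True by (simp add: islands_step_def censored_step_def)
next
  case False
  then show ?thesis
    by (simp add: islands_step_def censor_indep_ea_step)
qed

lemma censor_islands_state:
  "map_pmf (censor n r) (islands_state n r lam t)
     = map_pmf (censor n r) (indep_list (replicate lam (ea_dist n r t)))"
proof (induction t)
  case 0
  then show ?case by (simp add: islands_init_def bitstrings_def)
next
  case (Suc t)
  let ?free = "\<lambda>t. indep_list (replicate lam (ea_dist n r t))"
  have "map_pmf (censor n r) (islands_state n r lam (Suc t))
      = bind_pmf (islands_state n r lam t) (\<lambda>xs. censored_step n r (censor n r xs))"
    by (simp only: islands_state.simps map_bind_pmf censor_islands_step)
  also have "\<dots> = bind_pmf (map_pmf (censor n r) (islands_state n r lam t)) (censored_step n r)"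
    by (simp only: bind_map_pmf)
  also have "\<dots> = bind_pmf (map_pmf (censor n r) (?free t)) (censored_step n r)"
    by (simp only: Suc)
  also have "\<dots> = bind_pmf (?free t) (\<lambda>xs. map_pmf (censor n r) (indep_list (map (ea_step n r) xs)))"
    by (simp only: bind_map_pmf censor_indep_ea_step)
  also have "\<dots> = map_pmf (censor n r) (bind_pmf (?free t) (\<lambda>xs. indep_list (map (ea_step n r) xs)))"
    by (simp only: map_bind_pmf)
  also have "\<dots> = map_pmf (censor n r) (?free (Suc t))"
    by (simp add: bind_indep_list_map)
  finally show ?case .
qed

lemma prob_islands_no_opt:
  "measure_pmf.prob (islands_state n r lam t) {xs. \<not> has_opt n r xs} = (1 - p_opt t) ^ lam"
proof -
  have no_opt: "{xs. \<not> has_opt n r xs} = censor n r -` range Some"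
    by (auto simp: censor_def)
  have all_not_opt: "censor n r -` range Some = {xs. \<forall>x\<in>set xs. x \<noteq> opt}"
    by (auto simp: censor_def has_opt_def)
  have "{x. x \<noteq> opt} = UNIV - {opt}"
    by auto
  then have not_opt: "measure_pmf.prob (ea_dist n r t) {x. x \<noteq> opt} = 1 - p_opt t"
    using measure_pmf.prob_compl[of "{opt}" "ea_dist n r t"]
    by (simp add: measure_pmf_single p_opt_def)
  have "measure_pmf.prob (islands_state n r lam t) {xs. \<not> has_opt n r xs}
      = measure_pmf.prob (map_pmf (censor n r) (islands_state n r lam t)) (range Some)"
    by (simp only: no_opt measure_map_pmf)
  also have "\<dots> = measure_pmf.prob (map_pmf (censor n r) (indep_list (replicate lam (ea_dist n r t))))
                      (range Some)"
    by (simp only: censor_islands_state)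
  also have "\<dots> = (1 - p_opt t) ^ lam"
    by (simp only: measure_map_pmf all_not_opt prob_indep_list_all not_opt map_replicate
        prod_list_replicate length_replicate)
  finally show ?thesis .
qed

lemma expected_T_eq_suminf: "expected_T n r lam = (\<Sum>t. ennreal ((1 - p_opt t) ^ lam))"
  unfolding expected_T_def prob_islands_no_opt ..

end

section \<open>Summing the tail\<close>

lemma exp_neg_le_one_minus_quarter: "0 \<le> (x::real) \<Longrightarrow> x \<le> 3 \<Longrightarrow> exp (-x) \<le> 1 - x / 4"
proof -
  assume x: "0 \<le> x" "x \<le> 3"
  have "exp (-x) \<le> inverse (1 + x)"
    using x by (simp add: exp_minus le_imp_inverse_le add.commute)
  moreover have "1 \<le> (1 - x / 4) * (1 + x)"
    using x mult_nonneg_nonneg[of x "3 - x"] by (simp add: field_simps)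
  then have "inverse (1 + x) \<le> 1 - x / 4"
    using x by (simp add: field_simps)
  ultimately show ?thesis
    by linarith
qed

lemma exp_neg_le_quarter: "3 \<le> (x::real) \<Longrightarrow> exp (-x) \<le> 1 / 4"
proof -
  assume "3 \<le> x"
  then have "4 \<le> exp x"
    using exp_ge_add_one_self[of x] by linarith
  then show ?thesis by (simp add: exp_minus field_simps)
qed

lemma power_le_exp_mult: "0 \<le> (b::real) \<Longrightarrow> b \<le> exp y \<Longrightarrow> b ^ k \<le> exp (real k * y)"
  by (simp add: exp_of_nat_mult power_mono)

lemma power_le_exp_mult_of_le_one_plus: "(b::real) \<le> 1 + y \<Longrightarrow> 0 \<le> b \<Longrightarrow> b ^ k \<le> exp (real k * y)"
  using power_le_exp_mult[of b y k] exp_ge_add_one_self[of y] by (simp add: add.commute)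

lemma one_minus_power_le_exp: "0 \<le> (x::real) \<Longrightarrow> x \<le> 1 \<Longrightarrow> (1 - x) ^ k \<le> exp (- (x * real k))"
  using power_le_exp_mult_of_le_one_plus[of "1 - x" "- x" k] by (simp add: mult.commute)

lemma square_mult_exp_neg_third_le: "(x::real) \<ge> 0 \<Longrightarrow> x ^ 2 * exp (- x / 3) \<le> 36"
proof -
  assume x: "x \<ge> 0"
  have "x / 6 \<le> exp (x / 6)"
    using exp_ge_add_one_self[of "x / 6"] by linarith
  then have "(x / 6) ^ 2 \<le> exp (x / 6) ^ 2"
    using x by (intro power_mono) auto
  also have "\<dots> = exp (x / 3)"
    by (simp add: exp_of_nat_mult[symmetric])
  finally show ?thesis
    by (simp add: exp_minus field_simps)
qed

lemma inverse_one_minus_exp_neg_le: "(y::real) > 0 \<Longrightarrow> 1 / (1 - exp (- y)) \<le> 1 + 1 / y"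
proof -
  assume y: "y > 0"
  have "exp (-y) \<le> 1 / (1 + y)"
    using exp_ge_add_one_self[of y] y by (simp add: exp_minus field_simps)
  then have "y / (1 + y) \<le> 1 - exp (-y)"
    using y by (simp add: field_simps)
  moreover have "y / (1 + y) > 0"
    using y by simp
  ultimately have "0 < (1 - exp (-y)) * (y / (1 + y))"
    by (intro mult_pos_pos) linarith+
  then have "1 / (1 - exp (-y)) \<le> 1 / (y / (1 + y))"
    using y \<open>y / (1 + y) \<le> 1 - exp (-y)\<close> by (intro divide_left_mono) auto
  also have "\<dots> = 1 + 1 / y"
    using y by (simp add: field_simps)
  finally show ?thesis .
qed

lemma sum_power_le_inverse_one_minus: "0 \<le> (x::real) \<Longrightarrow> x < 1 \<Longrightarrow> (\<Sum>i<M. x ^ i) \<le> 1 / (1 - x)"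
  by (simp add: sum_gp_strict divide_right_mono)

lemma one_minus_power_ge_half_mult:
  assumes "0 \<le> (q::real)" "real k * q \<le> 1"
  shows "real k * q / 2 \<le> 1 - (1 - q) ^ k"
proof (cases "k = 0")
  case False
  then have "q \<le> 1"
    using assms mult_right_mono[of 1 "real k" q] by simp
  have "(1 - q) ^ k * (1 + real k * q) \<le> (1 - q) ^ k * (1 + q) ^ k"
    using Bernoulli_inequality[of q k] assms \<open>q \<le> 1\<close> by (intro mult_left_mono) auto
  also have "\<dots> = (1 - q * q) ^ k"
    by (simp add: power_mult_distrib[symmetric] algebra_simps)
  also have "\<dots> \<le> 1"
    using assms \<open>q \<le> 1\<close> by (intro power_le_one) (auto simp: mult_le_one)
  finally have "(1 - q) ^ k * (1 + real k * q) \<le> 1" .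
  moreover have "1 \<le> (1 - real k * q / 2) * (1 + real k * q)"
    using assms mult_nonneg_nonneg[of "real k * q" "1 - real k * q"] by (simp add: algebra_simps)
  ultimately have "(1 - q) ^ k * (1 + real k * q) \<le> (1 - real k * q / 2) * (1 + real k * q)"
    by linarith
  then show ?thesis
    using assms by (simp add: mult_le_cancel_right add_pos_nonneg)
qed simp

lemma sum_lessThan_shift:
  "(\<Sum>t<(N::nat). (if T \<le> t then f (t - T) else (0::real))) = (\<Sum>j<N - T. f j)"
proof (induction N)
  case (Suc N)
  then show ?case by (cases "T \<le> N") (simp_all add: Suc_diff_le)
qed simp

lemma sum_lessThan_div_2_le:
  assumes "\<And>k::nat. g k \<ge> (0::real)"
  shows "(\<Sum>t<N. g (t div 2)) \<le> 2 * (\<Sum>k<N. g k)"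
proof -
  have double: "(\<Sum>t<2 * M. g (t div 2)) = 2 * (\<Sum>k<M. g k)" for M :: nat
    by (induction M) (auto simp: algebra_simps)
  have "(\<Sum>t<N. g (t div 2)) \<le> (\<Sum>t<2 * N. g (t div 2))"
    by (rule sum_mono2) (auto simp: assms)
  then show ?thesis by (simp only: double)
qed

lemma sum_lessThan_indicator_le:
  "(\<Sum>t<N. (if t < M then c else (0::real))) \<le> real M * c" if "c \<ge> 0" for M N :: nat
proof -
  have "(\<Sum>t<N. (if t < M then c else (0::real))) = real (card ({..<N} \<inter> {..<M})) * c"
    by (simp add: sum.If_cases lessThan_def Int_def)
  also have "\<dots> \<le> real M * c"
    using that card_mono[of "{..<M}" "{..<N} \<inter> {..<M}"] by (intro mult_right_mono) auto
  finally show ?thesis .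
qed

lemma sum_lessThan_indicator_mult_le:
  assumes "(p::real) > 0" "L \<ge> 0"
  shows "(\<Sum>j<M. (if p * real j \<le> L then 1 else (0::real))) \<le> L / p + 1"
proof -
  have "{j\<in>{..<M}. p * real j \<le> L} \<subseteq> {..nat \<lfloor>L / p\<rfloor>}"
    using assms by (auto simp: le_nat_floor field_simps)
  then have "card {j\<in>{..<M}. p * real j \<le> L} \<le> nat \<lfloor>L / p\<rfloor> + 1"
    using card_mono[of "{..nat \<lfloor>L / p\<rfloor>}"] by fastforce
  moreover have "real (nat \<lfloor>L / p\<rfloor>) \<le> L / p"
    using assms by simp
  moreover have "{..<M} \<inter> {j. p * real j \<le> L} = {j\<in>{..<M}. p * real j \<le> L}"
    by auto
  ultimately show ?thesis
    by (simp add: sum.If_cases)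
qed

text \<open>The three bounds proved above for \<open>a = 1 - p_opt\<close> and \<open>u = p_other\<close> are all that the
  summation uses.\<close>

locale fork_tail_bound =
  fixes n r lam :: nat and a u :: "nat \<Rightarrow> real" and p q d :: real
  defines "p \<equiv> 1 / (exp 1 * real n ^ r)"
    and "q \<equiv> 1 / (exp 1 * real n ^ (2 * r))"
    and "d \<equiv> 1 / (exp 1 * real n)"
  assumes two_le_r: "2 \<le> r" and four_le_n: "4 \<le> n"
    and lam_pos: "1 \<le> lam" and lam_le: "lam \<le> n ^ r"
    and a_nonneg: "\<And>t. 0 \<le> a t" and a_le_1: "\<And>t. a t \<le> 1"
    and a_le_half: "\<And>t. a t \<le> (1 + u t) / 2"
    and a_le_decay: "\<And>s t. s \<le> t \<Longrightarrow> a t \<le> (1 - q) ^ (t - s) / 2 + u s"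
    and u_le: "\<And>s t. s \<le> t \<Longrightarrow> u t \<le> (1 - p) ^ (t - s) * (1 + real n * (1 - d) ^ s)"
begin

lemma n_pos: "real n > 0"
  using four_le_n by simp

lemma lam_real_pos: "real lam > 0"
  using lam_pos by simp

lemma n_pow_r_ge_16: "real n ^ r \<ge> 16"
proof -
  have "real n ^ r \<ge> real n ^ 2" using four_le_n two_le_r by (intro power_increasing) auto
  moreover have "real n ^ 2 \<ge> 4 ^ 2" using four_le_n by (intro power_mono) auto
  ultimately show ?thesis by simp
qed

lemma lam_real_le: "real lam \<le> real n ^ r"
  using lam_le by (metis of_nat_le_iff of_nat_power)

lemma ln_n_ge_1: "ln (real n) \<ge> 1"
  using exp_le four_le_n n_pos by (simp add: ln_ge_iff)

lemma p_pos: "p > 0" and q_pos: "q > 0" and d_pos: "d > 0"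
  using n_pos by (simp_all add: p_def q_def d_def)

lemma p_le: "p \<le> 1 / 16"
proof -
  have "1 * 16 \<le> exp 1 * real n ^ r" using n_pow_r_ge_16 by (intro mult_mono) auto
  then show ?thesis unfolding p_def by (simp add: field_simps)
qed

lemma d_le_1: "d \<le> 1"
proof -
  have "1 * 4 \<le> exp 1 * real n" using four_le_n by (intro mult_mono) auto
  then show ?thesis unfolding d_def by (simp add: field_simps)
qed

lemma n_pow_2r: "real n ^ (2 * r) = real n ^ r * real n ^ r"
  by (simp add: power_add[symmetric] mult_2)

lemma q_le_half_p: "q \<le> p / 2"
proof -
  have "exp 1 * (real n ^ r * 2) \<le> exp 1 * real n ^ (2 * r)"
    unfolding n_pow_2r using n_pow_r_ge_16 by (intro mult_left_mono) auto
  then have "1 / (exp 1 * real n ^ (2 * r)) \<le> 1 / (exp 1 * (real n ^ r * 2))"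
    using n_pos by (intro divide_left_mono) auto
  then show ?thesis unfolding p_def q_def by (simp add: field_simps)
qed

lemma one_minus_q_bounds: "0 \<le> 1 - q" "1 - q \<le> 1"
  using q_le_half_p p_le q_pos by auto

lemma lam_mult_q_le_1: "real lam * q \<le> 1"
proof -
  have "real lam * 1 \<le> real n ^ r * real n ^ r"
    using lam_real_le n_pow_r_ge_16 by (intro mult_mono) auto
  also have "\<dots> \<le> exp 1 * real n ^ (2 * r)"
    unfolding n_pow_2r using mult_right_mono[of 1 "exp 1" "real n ^ r * real n ^ r"] by simp
  finally show ?thesis unfolding q_def using n_pos by (simp add: field_simps)
qed

text \<open>\<open>eps\<close> is small enough that \<open>(1 + eps)\<^sup>l\<^sup>a\<^sup>m \<le> e\<close>; after the burn-in \<open>T0\<close> the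
  expected number of zeros is below \<open>eps\<close>.\<close>

definition eps :: real where
  "eps = 1 / real n ^ (r + 1)"

definition T0 :: nat where
  "T0 = nat \<lceil>real (r + 2) * exp 1 * real n * ln (real n)\<rceil>"

lemma eps_nonneg: "eps \<ge> 0"
  unfolding eps_def by simp

lemma lam_mult_eps_le_1: "real lam * eps \<le> 1"
proof -
  have "real lam * eps \<le> real n ^ r * eps"
    using lam_real_le eps_nonneg by (intro mult_right_mono) auto
  also have "\<dots> = 1 / real n" unfolding eps_def using n_pos by (simp add: field_simps)
  also have "\<dots> \<le> 1" using four_le_n by simp
  finally show ?thesis .
qed

lemma eps_le: "eps \<le> 1 / 64"
proof -
  have "real n ^ (r + 1) \<ge> real n ^ 3" using four_le_n two_le_r by (intro power_increasing) auto
  moreover have "real n ^ 3 \<ge> 4 ^ 3" using four_le_n by (intro power_mono) auto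
  ultimately show ?thesis unfolding eps_def by (simp add: field_simps)
qed

lemma n_mult_decay_T0_le_eps: "real n * (1 - d) ^ T0 \<le> eps"
proof -
  have "real (r + 2) * exp 1 * real n * ln (real n) \<le> real T0"
    unfolding T0_def by linarith
  then have "real (r + 2) * ln (real n) \<le> d * real T0"
    using d_pos mult_left_mono[of _ _ d] unfolding d_def by (fastforce simp: field_simps)
  moreover have "(1 - d) ^ T0 \<le> exp (- (d * real T0))"
    using one_minus_power_le_exp[of d T0] d_pos d_le_1 by simp
  ultimately have "(1 - d) ^ T0 \<le> exp (- (real (r + 2) * ln (real n)))"
    by (meson exp_le_cancel_iff neg_le_iff_le order_trans)
  also have "\<dots> = 1 / real n ^ (r + 2)"
    using exp_of_nat_mult[of "r + 2" "ln (real n)"] n_pos by (simp add: exp_minus divide_inverse)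
  finally have "real n * (1 - d) ^ T0 \<le> real n * (1 / real n ^ (r + 2))"
    using n_pos by (intro mult_left_mono) auto
  also have "\<dots> = eps"
    unfolding eps_def using n_pos by (simp add: field_simps)
  finally show ?thesis .
qed

lemma a_le_after_T0:
  assumes "T0 \<le> t"
  shows "a t \<le> (1 + exp (- (p * real (t - T0))) + eps) / 2"
proof -
  have "u t \<le> (1 - p) ^ (t - T0) * (1 + real n * (1 - d) ^ T0)"
    using u_le[OF assms] .
  also have "\<dots> \<le> exp (- (p * real (t - T0))) * (1 + eps)"
    using one_minus_power_le_exp[of p "t - T0"] p_pos p_le n_mult_decay_T0_le_eps d_le_1
    by (intro mult_mono) auto
  also have "\<dots> \<le> exp (- (p * real (t - T0))) + eps"
    using p_pos eps_nonneg mult_right_mono[of "exp (- (p * real (t - T0)))" 1 eps]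
    by (simp add: algebra_simps)
  finally show ?thesis
    using a_le_half[of t] by simp
qed

lemma pow_a_le_after_T0_early:
  assumes "T0 \<le> t" and "p * real (t - T0) \<le> 3"
  shows "a t ^ lam \<le> exp 1 * exp (- (real lam * (p * real (t - T0)) / 8))"
proof -
  define x where "x = p * real (t - T0)"
  have "0 \<le> x" unfolding x_def using p_pos by simp
  then have "a t \<le> 1 + (- x / 8 + eps / 2)"
    using a_le_after_T0[OF assms(1)] exp_neg_le_one_minus_quarter[of x] assms(2)
    unfolding x_def by simp
  then have "a t ^ lam \<le> exp (real lam * (- x / 8 + eps / 2))"
    using a_nonneg by (rule power_le_exp_mult_of_le_one_plus)
  also have "\<dots> = exp (- (real lam * x / 8)) * exp (real lam * eps / 2)"
    by (simp add: algebra_simps flip: exp_add)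
  also have "\<dots> \<le> exp (- (real lam * x / 8)) * exp 1"
    using lam_mult_eps_le_1 by (intro mult_left_mono) auto
  finally show ?thesis
    unfolding x_def by (simp add: mult.commute)
qed

lemma pow_a_le_after_T0_middle:
  assumes "T0 \<le> t" and "3 \<le> p * real (t - T0)"
  shows "a t ^ lam \<le> exp (- real lam / 3)"
proof -
  have "a t \<le> 2 / 3"
    using a_le_after_T0[OF assms(1)] exp_neg_le_quarter[OF assms(2)] eps_le by simp
  also have "\<dots> \<le> exp (- 1 / 3)"
    using exp_ge_add_one_self[of "- 1 / 3"] by simp
  finally show ?thesis
    using power_le_exp_mult[OF a_nonneg, of t "- 1 / 3" lam] by simp
qed

lemma pow_a_le_after_T0_late:
  assumes "T0 \<le> t" and "ln (real lam) < p * real (t - T0)"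
  shows "a t ^ lam \<le> exp 2 / 2 ^ lam"
proof -
  define x where "x = p * real (t - T0)"
  have "exp (- x) < exp (- ln (real lam))"
    using assms(2) unfolding x_def by simp
  also have "\<dots> = 1 / real lam"
    using lam_pos by (simp add: exp_minus divide_inverse)
  finally have "real lam * exp (- x) \<le> 1"
    using lam_pos by (simp add: field_simps)
  have "2 * a t \<le> 1 + (exp (- x) + eps)"
    using a_le_after_T0[OF assms(1)] unfolding x_def by simp
  then have "(2 * a t) ^ lam \<le> exp (real lam * (exp (- x) + eps))"
    by (rule power_le_exp_mult_of_le_one_plus) (simp add: a_nonneg)
  also have "\<dots> \<le> exp 2"
    using \<open>real lam * exp (- x) \<le> 1\<close> lam_mult_eps_le_1 by (simp add: algebra_simps)
  finally show ?thesis
    by (simp add: field_simps)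
qed

lemma pow_a_le_after_T0:
  assumes "T0 \<le> t"
  shows "a t ^ lam \<le> exp 1 * exp (- (real lam * p / 8)) ^ (t - T0)
           + (if p * real (t - T0) \<le> ln (real lam) then exp (- real lam / 3) else 0)
           + exp 2 / 2 ^ lam"
proof -
  let ?x = "p * real (t - T0)"
  let ?middle = "if ?x \<le> ln (real lam) then exp (- real lam / 3) else 0"
  have early_eq: "exp (- (real lam * ?x / 8)) = exp (- (real lam * p / 8)) ^ (t - T0)"
    by (simp add: exp_of_nat_mult[symmetric] algebra_simps)
  have nonneg: "0 \<le> exp 1 * exp (- (real lam * p / 8)) ^ (t - T0)" "0 \<le> ?middle"
    "0 \<le> exp 2 / (2::real) ^ lam"
    by simp_all
  consider "?x \<le> 3" | "3 \<le> ?x" "?x \<le> ln (real lam)" | "ln (real lam) < ?x"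
    by linarith
  then show ?thesis
  proof cases
    case 1
    then have "a t ^ lam \<le> exp 1 * exp (- (real lam * p / 8)) ^ (t - T0)"
      using pow_a_le_after_T0_early[OF assms] early_eq by simp
    then show ?thesis
      using nonneg by linarith
  next
    case 2
    then have "?middle = exp (- real lam / 3)"
      by simp
    then show ?thesis
      using pow_a_le_after_T0_middle[OF assms 2(1)] nonneg by linarith
  next
    case 3
    then show ?thesis
      using pow_a_le_after_T0_late[OF assms] nonneg by linarith
  qed
qed

text \<open>From \<open>KB\<close> on, \<open>u\<close> is at most a \<open>1 / lam\<close> fraction of the trap term
  \<open>(1 - q)\<^sup>s / 2\<close>.\<close>

definition KB :: nat where
  "KB = nat \<lceil>2 / p * ln (2 * (real n + 1) * real lam)\<rceil>"

lemma one_minus_p_power_le: "(1 - p) ^ s \<le> (1 - q) ^ s * exp (- (p / 2) * real s)"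
proof -
  have "(1 - q) * (1 - p / 2) = 1 - p / 2 - q + q * p / 2"
    by (simp add: field_simps)
  moreover have "q * p / 2 \<ge> 0"
    using q_pos p_pos by simp
  ultimately have "1 - p \<le> (1 - q) * (1 - p / 2)"
    using q_le_half_p by linarith
  also have "\<dots> \<le> (1 - q) * exp (- (p / 2))"
    using one_minus_q_bounds exp_ge_add_one_self[of "- (p / 2)"] by (intro mult_left_mono) auto
  finally have "(1 - p) ^ s \<le> ((1 - q) * exp (- (p / 2))) ^ s"
    using p_le by (intro power_mono) auto
  also have "\<dots> = (1 - q) ^ s * exp (- (p / 2) * real s)"
    by (simp add: power_mult_distrib exp_of_nat_mult[symmetric] mult.commute)
  finally show ?thesis .
qed

lemma exp_neg_half_p_le:
  assumes "KB \<le> s"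
  shows "exp (- (p / 2) * real s) \<le> 1 / (2 * (real n + 1) * real lam)"
proof -
  have pos: "2 * (real n + 1) * real lam > 0"
    using lam_pos by simp
  have "2 / p * ln (2 * (real n + 1) * real lam) \<le> real s"
    using assms unfolding KB_def by linarith
  then have "ln (2 * (real n + 1) * real lam) \<le> p / 2 * real s"
    using p_pos by (simp add: field_simps)
  then have "exp (- (p / 2) * real s) \<le> exp (- ln (2 * (real n + 1) * real lam))"
    by simp
  also have "\<dots> = 1 / (2 * (real n + 1) * real lam)"
    using pos by (simp add: exp_minus divide_inverse)
  finally show ?thesis .
qed

lemma a_le_after_2KB:
  assumes "KB \<le> s" and "2 * s \<le> t"
  shows "2 * a t \<le> (1 - q) ^ s * (1 + 1 / real lam)"
proof -
  have "a t \<le> (1 - q) ^ (t - s) / 2 + u s"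
    using assms by (intro a_le_decay) simp
  also have "(1 - q) ^ (t - s) \<le> (1 - q) ^ s"
    using one_minus_q_bounds assms by (intro power_decreasing) auto
  also have "u s \<le> (1 - p) ^ s * (1 + real n)"
    using u_le[of 0 s] by simp
  also have "(1 - p) ^ s \<le> (1 - q) ^ s * (1 / (2 * (real n + 1) * real lam))"
    using one_minus_p_power_le[of s] exp_neg_half_p_le[OF assms(1)] one_minus_q_bounds
      mult_left_mono[of "exp (- (p / 2) * real s)" _ "(1 - q) ^ s"]
    by fastforce
  also have "(1 - q) ^ s * (1 / (2 * (real n + 1) * real lam)) * (1 + real n) = (1 - q) ^ s / (2 * real lam)"
  proof -
    have "1 / (2 * (real n + 1) * real lam) * (1 + real n) = (real n + 1) / ((real n + 1) * (2 * real lam))"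
      by (simp add: algebra_simps)
    also have "\<dots> = 1 / (2 * real lam)"
      using n_pos by simp
    finally have "1 / (2 * (real n + 1) * real lam) * (1 + real n) = 1 / (2 * real lam)" .
    then show ?thesis
      unfolding mult.assoc by simp
  qed
  also have "(1 - q) ^ s / 2 + (1 - q) ^ s / (2 * real lam) = (1 - q) ^ s * (1 + 1 / real lam) / 2"
    using lam_real_pos by (simp add: field_simps)
  finally show ?thesis
    by simp
qed

lemma pow_a_le_after_2KB:
  assumes "2 * KB \<le> t"
  shows "a t ^ lam \<le> exp 1 * (1 / 2) ^ lam * ((1 - q) ^ lam) ^ (t div 2)"
proof -
  define s where "s = t div 2"
  have "(2 * a t) ^ lam \<le> ((1 - q) ^ s * (1 + 1 / real lam)) ^ lam"
    using a_le_after_2KB[of s t] assms a_nonneg unfolding s_def by (intro power_mono) auto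
  also have "\<dots> = ((1 - q) ^ lam) ^ s * (1 + 1 / real lam) ^ lam"
    by (simp add: power_mult_distrib power_mult[symmetric] mult.commute)
  also have "(1 + 1 / real lam) ^ lam \<le> exp 1"
    using power_le_exp_mult_of_le_one_plus[of "1 + 1 / real lam" "1 / real lam" lam] lam_pos by simp
  finally have "2 ^ lam * a t ^ lam \<le> ((1 - q) ^ lam) ^ s * exp 1"
    using one_minus_q_bounds by (simp add: power_mult_distrib mult_left_mono)
  then show ?thesis
    unfolding s_def by (simp add: field_simps)
qed

text \<open>One summand for each regime of \<open>t\<close>, so that each can be summed on its own.\<close>

definition bound_seq :: "nat \<Rightarrow> real" where
  "bound_seq t = (if t < T0 then 1 else 0)
     + (if T0 \<le> t then exp 1 * exp (- (real lam * p / 8)) ^ (t - T0) else 0)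
     + (if T0 \<le> t then (if p * real (t - T0) \<le> ln (real lam) then exp (- real lam / 3) else 0) else 0)
     + (if t < 2 * KB then exp 2 / 2 ^ lam else 0)
     + exp 1 * (1 / 2) ^ lam * ((1 - q) ^ lam) ^ (t div 2)"

lemma pow_a_le_bound_seq: "a t ^ lam \<le> bound_seq t"
proof -
  let ?early = "exp 1 * exp (- (real lam * p / 8)) ^ (t - T0)"
  let ?middle = "if p * real (t - T0) \<le> ln (real lam) then exp (- real lam / 3) else 0"
  let ?late = "exp 1 * (1 / 2) ^ lam * ((1 - q) ^ lam) ^ (t div 2)"
  have nonneg: "0 \<le> (if t < T0 then 1 else (0::real))" "0 \<le> (if T0 \<le> t then ?early else 0)"
    "0 \<le> (if T0 \<le> t then ?middle else 0)" "0 \<le> (if t < 2 * KB then exp 2 / (2::real) ^ lam else 0)"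
    "0 \<le> ?late"
    using one_minus_q_bounds by simp_all
  consider "t < T0" | "T0 \<le> t" "t < 2 * KB" | "2 * KB \<le> t"
    by linarith
  then show ?thesis
  proof cases
    case 1
    then have "a t ^ lam \<le> (if t < T0 then 1 else 0)"
      using a_nonneg a_le_1 by (simp add: power_le_one)
    then show ?thesis
      using nonneg unfolding bound_seq_def by linarith
  next
    case 2
    then show ?thesis
      using pow_a_le_after_T0[OF 2(1)] nonneg unfolding bound_seq_def by auto
  next
    case 3
    then show ?thesis
      using pow_a_le_after_2KB[OF 3] nonneg unfolding bound_seq_def by linarith
  qed
qed

lemma sum_geometric_after_T0_le:
  "(\<Sum>t<N. (if T0 \<le> t then exp 1 * exp (- (real lam * p / 8)) ^ (t - T0) else 0))
     \<le> exp 1 * (1 + 8 / (real lam * p))"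
proof -
  let ?rho = "exp (- (real lam * p / 8))"
  have y: "real lam * p / 8 > 0" using lam_pos p_pos by simp
  then have "0 \<le> ?rho" "?rho < 1" by auto
  then have "(\<Sum>j<N - T0. ?rho ^ j) \<le> 1 / (1 - ?rho)"
    by (rule sum_power_le_inverse_one_minus)
  also have "\<dots> \<le> 1 + 1 / (real lam * p / 8)"
    using inverse_one_minus_exp_neg_le[OF y] .
  finally have "exp 1 * (\<Sum>j<N - T0. ?rho ^ j) \<le> exp 1 * (1 + 8 / (real lam * p))"
    by (simp add: mult_left_mono)
  moreover have "(\<Sum>t<N. (if T0 \<le> t then exp 1 * ?rho ^ (t - T0) else 0)) = (\<Sum>j<N - T0. exp 1 * ?rho ^ j)"
    by (rule sum_lessThan_shift)
  ultimately show ?thesis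
    by (simp add: sum_distrib_left)
qed

lemma sum_middle_after_T0_le:
  "(\<Sum>t<N. (if T0 \<le> t then (if p * real (t - T0) \<le> ln (real lam) then exp (- real lam / 3) else 0)
      else 0)) \<le> exp (- real lam / 3) * (ln (real lam) / p + 1)"
proof -
  have "(\<Sum>t<N. (if T0 \<le> t then (if p * real (t - T0) \<le> ln (real lam) then exp (- real lam / 3)
      else 0) else 0)) = (\<Sum>j<N - T0. (if p * real j \<le> ln (real lam) then exp (- real lam / 3) else 0))"
    by (rule sum_lessThan_shift)
  also have "\<dots> = exp (- real lam / 3) * (\<Sum>j<N - T0. (if p * real j \<le> ln (real lam) then 1 else 0))"
    unfolding sum_distrib_left by (rule sum.cong) auto
  also have "\<dots> \<le> exp (- real lam / 3) * (ln (real lam) / p + 1)"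
    using sum_lessThan_indicator_mult_le[OF p_pos, of "ln (real lam)" "N - T0"] lam_pos
    by (intro mult_left_mono) auto
  finally show ?thesis .
qed

lemma sum_after_2KB_le:
  "(\<Sum>t<N. exp 1 * (1 / 2) ^ lam * ((1 - q) ^ lam) ^ (t div 2))
     \<le> exp 1 * (1 / 2) ^ lam * (4 / (real lam * q))"
proof -
  let ?c = "(1 - q) ^ lam"
  have lam_q: "real lam * q > 0" using lam_pos q_pos by simp
  have c_bounds: "0 \<le> ?c" "?c \<le> 1" using one_minus_q_bounds by (auto intro: power_le_one)
  have c_gap: "real lam * q / 2 \<le> 1 - ?c"
    using one_minus_power_ge_half_mult[of q lam] q_pos lam_mult_q_le_1 by simp
  have "(\<Sum>t<N. ?c ^ (t div 2)) \<le> 2 * (\<Sum>k<N. ?c ^ k)"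
    by (rule sum_lessThan_div_2_le) (use c_bounds in auto)
  also have "\<dots> \<le> 2 * (1 / (1 - ?c))"
    using sum_power_le_inverse_one_minus[OF c_bounds(1), of N] c_gap lam_q by simp
  also have "1 / (1 - ?c) \<le> 1 / (real lam * q / 2)"
    using c_gap lam_q by (intro divide_left_mono) auto
  finally have "(\<Sum>t<N. ?c ^ (t div 2)) \<le> 4 / (real lam * q)"
    by simp
  then show ?thesis
    by (simp only: sum_distrib_left[symmetric]) (intro mult_left_mono, auto)
qed

lemma sum_bound_seq_le:
  "(\<Sum>t<N. bound_seq t) \<le> real T0 + exp 1 * (1 + 8 / (real lam * p))
     + exp (- real lam / 3) * (ln (real lam) / p + 1) + real (2 * KB) * (exp 2 / 2 ^ lam)
     + exp 1 * (1 / 2) ^ lam * (4 / (real lam * q))"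
  using sum_lessThan_indicator_le[of 1 T0 N] sum_lessThan_indicator_le[of "exp 2 / 2 ^ lam" "2 * KB" N]
    sum_geometric_after_T0_le[of N] sum_middle_after_T0_le[of N] sum_after_2KB_le[of N]
  unfolding bound_seq_def sum.distrib by simp

lemma exp_1_squared_le_9: "exp 1 * exp 1 \<le> (9::real)"
  using exp_le mult_mono[of "exp 1" "3::real" "exp 1" 3] by simp

lemma n_ln_n_ge_1: "real n * ln (real n) \<ge> 1"
  using ln_n_ge_1 four_le_n mult_mono[of 1 "real n" 1 "ln (real n)"] by simp

lemma T0_le: "real T0 \<le> 3 * real (r + 2) * (real n * ln (real n)) + real n * ln (real n)"
proof -
  have "0 \<le> real (r + 2) * exp 1 * real n * ln (real n)"
    using ln_n_ge_1 by simp
  then have "real T0 \<le> real (r + 2) * exp 1 * (real n * ln (real n)) + 1"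
    unfolding T0_def by linarith
  also have "\<dots> \<le> real (r + 2) * 3 * (real n * ln (real n)) + 1"
    using exp_le n_ln_n_ge_1 by (intro add_right_mono mult_right_mono mult_left_mono) auto
  finally show ?thesis
    using n_ln_n_ge_1 by (simp add: mult.commute)
qed

lemma geometric_term_le:
  "exp 1 * (1 + 8 / (real lam * p)) \<le> 3 * (real n * ln (real n)) + 72 * (real n ^ r / real lam)"
proof -
  have "exp 1 * (1 + 8 / (real lam * p)) = exp 1 + 8 * ((exp 1 * exp 1) * (real n ^ r / real lam))"
    unfolding p_def using lam_pos by (simp add: field_simps)
  moreover have "(exp 1 * exp 1) * (real n ^ r / real lam) \<le> 9 * (real n ^ r / real lam)"
    using exp_1_squared_le_9 by (intro mult_right_mono) auto
  ultimately show ?thesis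
    using exp_le n_ln_n_ge_1 by linarith
qed

lemma middle_term_le:
  "exp (- real lam / 3) * (ln (real lam) / p + 1) \<le> 108 * (real n ^ r / real lam) + real n * ln (real n)"
proof -
  have lam: "real lam > 0" using lam_pos by simp
  have "ln (real lam) / p = exp 1 * real n ^ r * ln (real lam)"
    unfolding p_def by simp
  also have "\<dots> \<le> exp 1 * real n ^ r * real lam"
    using ln_le_minus_one[OF lam] by (intro mult_left_mono) auto
  finally have "exp (- real lam / 3) * (ln (real lam) / p)
      \<le> exp (- real lam / 3) * (exp 1 * real n ^ r * real lam)"
    by (intro mult_left_mono) auto
  also have "\<dots> = exp 1 * (real n ^ r / real lam) * (real lam ^ 2 * exp (- real lam / 3))"
    using lam by (simp add: field_simps power2_eq_square)
  also have "\<dots> \<le> 3 * (real n ^ r / real lam) * 36"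
    using square_mult_exp_neg_third_le[of "real lam"] exp_le
    by (intro mult_mono) auto
  finally have "exp (- real lam / 3) * (ln (real lam) / p) \<le> 108 * (real n ^ r / real lam)"
    by simp
  moreover have "exp (- real lam / 3) \<le> 1"
    using lam by simp
  moreover have "exp (- real lam / 3) * (ln (real lam) / p + 1)
      = exp (- real lam / 3) * (ln (real lam) / p) + exp (- real lam / 3)"
    by (simp add: distrib_left)
  ultimately show ?thesis
    using n_ln_n_ge_1 by linarith
qed

lemma KB_le: "real KB \<le> 2 * exp 1 * real n ^ r * (real (r + 2) * ln (real n)) + 1"
proof -
  have pos: "2 * (real n + 1) * real lam > 0"
    using lam_pos by simp
  have "2 * (real n + 1) \<le> 4 * real n"
    using four_le_n by simp
  also have "\<dots> \<le> real n * real n"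
    using four_le_n by (intro mult_right_mono) auto
  finally have "2 * (real n + 1) \<le> real n ^ 2"
    by (simp add: power2_eq_square)
  then have "2 * (real n + 1) * real lam \<le> real n ^ 2 * real n ^ r"
    using lam_real_le by (intro mult_mono) auto
  also have "\<dots> = real n ^ (r + 2)"
    by (metis power_add add.commute)
  finally have "ln (2 * (real n + 1) * real lam) \<le> ln (real n ^ (r + 2))"
    using pos by simp
  also have "\<dots> = real (r + 2) * ln (real n)"
    using n_pos by (simp only: ln_realpow)
  finally have "ln (2 * (real n + 1) * real lam) \<le> real (r + 2) * ln (real n)" .
  then have "2 / p * ln (2 * (real n + 1) * real lam) \<le> 2 / p * (real (r + 2) * ln (real n))"
    using p_pos by (intro mult_left_mono) auto
  also have "\<dots> = 2 * exp 1 * real n ^ r * (real (r + 2) * ln (real n))"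
    unfolding p_def by simp
  finally have "2 / p * ln (2 * (real n + 1) * real lam)
      \<le> 2 * exp 1 * real n ^ r * (real (r + 2) * ln (real n))" .
  moreover have "1 * 1 \<le> 2 * (real n + 1) * real lam"
    using lam_pos by (intro mult_mono) auto
  then have "0 \<le> 2 / p * ln (2 * (real n + 1) * real lam)"
    using p_pos by simp
  ultimately show ?thesis
    unfolding KB_def by linarith
qed

lemma n_pow_r_ln_le:
  "real n ^ r * ln (real n) / 2 ^ lam \<le> real n ^ (2 * r) / (real lam * 2 ^ lam) + real n * ln (real n)"
proof (cases "real lam * ln (real n) \<le> real n ^ r")
  case True
  have "real n ^ r * ln (real n) / 2 ^ lam = (real lam * ln (real n)) * real n ^ r / (real lam * 2 ^ lam)"
    using lam_pos by (simp add: field_simps)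
  also have "\<dots> \<le> real n ^ r * real n ^ r / (real lam * 2 ^ lam)"
    using True n_pos by (intro divide_right_mono mult_right_mono) auto
  finally show ?thesis
    using n_ln_n_ge_1 by (simp add: n_pow_2r)
next
  case False
  have "real lam \<le> 2 ^ lam"
    using less_exp[of lam] by (simp flip: of_nat_less_iff)
  then have "real n ^ r * ln (real n) / 2 ^ lam \<le> real n ^ r * ln (real n) / real lam"
    using lam_pos ln_n_ge_1 n_pos by (intro divide_left_mono) auto
  also have "\<dots> \<le> (real lam * ln (real n)) * ln (real n) / real lam"
    using False ln_n_ge_1 by (intro divide_right_mono mult_right_mono) auto
  also have "\<dots> \<le> real n * ln (real n)"
    using lam_pos ln_le_minus_one[OF n_pos] ln_n_ge_1 by (simp add: mult_right_mono)
  moreover have "0 \<le> real n ^ (2 * r) / (real lam * 2 ^ lam)"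
    by simp
  ultimately show ?thesis
    by linarith
qed

lemma KB_term_le:
  "real (2 * KB) * (exp 2 / 2 ^ lam)
     \<le> 108 * real (r + 2) * (real n ^ (2 * r) / (real lam * 2 ^ lam) + real n * ln (real n))
       + 18 * (real n * ln (real n))"
proof -
  have "real (2 * KB) \<le> 4 * exp 1 * real (r + 2) * (real n ^ r * ln (real n)) + 2"
    using KB_le by (simp add: algebra_simps)
  also have "\<dots> \<le> 12 * real (r + 2) * (real n ^ r * ln (real n)) + 2"
    using exp_le n_pos ln_n_ge_1 by (intro add_right_mono mult_right_mono) auto
  finally have "real (2 * KB) * (exp 2 / 2 ^ lam)
      \<le> (12 * real (r + 2) * (real n ^ r * ln (real n)) + 2) * (9 / 2 ^ lam)"
    using exp_1_squared_le_9 by (intro mult_mono divide_right_mono) (auto simp flip: exp_add)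
  also have "\<dots> = 108 * real (r + 2) * (real n ^ r * ln (real n) / 2 ^ lam) + 18 / 2 ^ lam"
    by (simp add: algebra_simps)
  also have "\<dots> \<le> 108 * real (r + 2) * (real n ^ (2 * r) / (real lam * 2 ^ lam) + real n * ln (real n))
       + 18 * (real n * ln (real n))"
    using n_pow_r_ln_le n_ln_n_ge_1 divide_left_mono[of 1 "2 ^ lam" "18::real"]
    by (intro add_mono mult_left_mono) auto
  finally show ?thesis .
qed

lemma late_term_le:
  "exp 1 * (1 / 2) ^ lam * (4 / (real lam * q)) \<le> 36 * (real n ^ (2 * r) / (real lam * 2 ^ lam))"
proof -
  have "exp 1 * (1 / 2) ^ lam * (4 / (real lam * q))
      = 4 * (exp 1 * exp 1) * (real n ^ (2 * r) / (real lam * 2 ^ lam))"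
    unfolding q_def using lam_pos by (simp add: field_simps)
  then show ?thesis
    using exp_1_squared_le_9 mult_right_mono[of "exp 1 * exp 1" 9 "real n ^ (2 * r) / (real lam * 2 ^ lam)"]
    by simp
qed

lemma sum_pow_a_le:
  "(\<Sum>t<N. a t ^ lam) \<le> 120 * real (r + 2) *
     (real n * ln (real n) + real n ^ (2 * r) / (real lam * 2 ^ lam) + real n ^ r / real lam)"
proof -
  define R L W V where "R = real (r + 2)" and "L = real n * ln (real n)"
    and "W = real n ^ (2 * r) / (real lam * 2 ^ lam)" and "V = real n ^ r / real lam"
  have "(\<Sum>t<N. a t ^ lam) \<le> (\<Sum>t<N. bound_seq t)"
    by (intro sum_mono pow_a_le_bound_seq)
  also have "\<dots> \<le> real T0 + exp 1 * (1 + 8 / (real lam * p))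
     + exp (- real lam / 3) * (ln (real lam) / p + 1) + real (2 * KB) * (exp 2 / 2 ^ lam)
     + exp 1 * (1 / 2) ^ lam * (4 / (real lam * q))"
    by (rule sum_bound_seq_le)
  also have "\<dots> \<le> (3 * R * L + L) + (3 * L + 72 * V) + (108 * V + L) + (108 * R * (W + L) + 18 * L)
      + 36 * W"
    unfolding R_def L_def W_def V_def
    by (intro add_mono T0_le geometric_term_le middle_term_le KB_term_le late_term_le)
  also have "\<dots> = 111 * (R * L) + 108 * (R * W) + 23 * L + 36 * W + 180 * V"
    by (simp add: algebra_simps)
  also have "\<dots> \<le> 120 * (R * L) + 120 * (R * W) + 120 * (R * V)"
  proof -
    have "4 * X \<le> R * X" if "0 \<le> X" for X
      using two_le_r that unfolding R_def by (intro mult_right_mono) auto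
    moreover have "1 \<le> L" "0 \<le> W" "0 \<le> V"
      using n_ln_n_ge_1 unfolding L_def W_def V_def by simp_all
    ultimately have "4 * L \<le> R * L" "4 * W \<le> R * W" "4 * V \<le> R * V"
      by simp_all
    with \<open>1 \<le> L\<close> \<open>0 \<le> W\<close> \<open>0 \<le> V\<close> show ?thesis
      by linarith
  qed
  also have "\<dots> = 120 * R * (L + W + V)"
    by (simp add: algebra_simps)
  finally show ?thesis
    unfolding R_def L_def W_def V_def .
qed

end

lemma suminf_ennreal_le:
  assumes "\<And>t. 0 \<le> f t" and "\<And>N. (\<Sum>t<N. f t) \<le> B"
  shows "(\<Sum>t. ennreal (f t)) \<le> ennreal B"
proof -
  have "(\<Sum>t<N. ennreal (f t)) = ennreal (\<Sum>t<N. f t)" for N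
    using assms(1) by simp
  then show ?thesis
    unfolding suminf_eq_SUP using assms(2) by (auto intro!: SUP_least ennreal_leI)
qed

lemma expected_T_le:
  assumes "2 \<le> r" and "2 * r \<le> n" and "1 \<le> lam" and "lam \<le> n ^ r"
  shows "expected_T n r lam \<le> ennreal (120 * real (r + 2) *
    (real n * ln (real n) + real n ^ (2 * r) / (real lam * 2 ^ lam) + real n ^ r / real lam))"
proof -
  interpret fork_setting n r
    using assms by unfold_locales auto
  interpret fork_tail_bound n r lam "\<lambda>t. 1 - p_opt t" p_other
    "1 / (exp 1 * real n ^ r)" "1 / (exp 1 * real n ^ (2 * r))" "1 / (exp 1 * real n)"
  proof unfold_locales
    show "0 \<le> 1 - p_opt t" "1 - p_opt t \<le> 1" for t
      by (simp_all add: p_opt_def pmf_le_1)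
    show "1 - p_opt t \<le> (1 + p_other t) / 2" for t
      by (rule not_opt_le_half)
    show "1 - p_opt t \<le> (1 - 1 / (exp 1 * real n ^ (2 * r))) ^ (t - s) / 2 + p_other s"
      if "s \<le> t" for s t
      using escape_prob_ge that by (intro not_opt_le_decay) auto
    show "p_other t \<le> (1 - 1 / (exp 1 * real n ^ r)) ^ (t - s) * (1 + real n * (1 - 1 / (exp 1 * real n)) ^ s)"
      if "s \<le> t" for s t
      using assms(1) that by (rule p_other_decay)
  qed (use assms in simp_all)
  show ?thesis
    unfolding expected_T_eq_suminf
    by (rule suminf_ennreal_le[OF _ sum_pow_a_le]) (simp add: p_opt_def pmf_le_1)
qed

theorem theorem4:
  fixes r :: nat and lam :: "nat \<Rightarrow> nat"
  assumes "r \<ge> 2"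
    and "\<forall>\<^sub>F n in at_top. 1 \<le> lam n \<and> lam n \<le> n ^ r"
  shows "\<exists>C>0. \<forall>\<^sub>F n in at_top.
           expected_T n r (lam n) \<le>
             ennreal (C * (real n * ln (real n)
                           + real n ^ (2 * r) / (real (lam n) * 2 ^ lam n)
                           + real n ^ r / real (lam n)))"
proof (intro exI conjI)
  show "(0::real) < 120 * real (r + 2)"
    by simp
  show "\<forall>\<^sub>F n in at_top. expected_T n r (lam n) \<le> ennreal (120 * real (r + 2) *
      (real n * ln (real n) + real n ^ (2 * r) / (real (lam n) * 2 ^ lam n) + real n ^ r / real (lam n)))"
    using eventually_ge_at_top[of "2 * r"] assms(2)
    by eventually_elim (rule expected_T_le[OF assms(1)], simp_all)
qed

end
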